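(* Let $\mathcal C$ be a $\Delta$-complex labeled over $B(X,P)$, let $H$ be a closed inverse submonoid of $M(X,P)$ and let $\Gamma_H$ be its $\omega$-coset graph. Let $k\ge2$ and let $\mathcal E$ be a $\Delta$-complex labeled over $B(X,P)$ together with an immersion $f^S\colon\mathcal E\to\mathcal C$ commuting with the labelings, such that the labeled graph $\Gamma_{\mathcal E}$ is identified (label-preservingly) with a subgraph $S$ of $\Gamma_H$ having the same vertex set as $\Gamma_H$ and containing all edges of $\Gamma_H$ labeled by letters of $X\cup X^{-1}\cup P_2\cup\dots\cup P_{k-1}$. Let $v$ be a vertex of $\Gamma_H$ at which $\Gamma_H$ has a loop labeled $\rho\in P_k$ that is not in $S$, and suppose $C^k$ is a $k$-cell of $\mathcal C$ labeled $\rho$ with root $f^S(v)$; let $\varphi_k=\sigma_{C^k}|_{\partial\Delta^k}$ be its attaching map. Then there exists a unique map $\tilde\varphi_k\colon\partial\Delta^k\to\mathcal E$ such that $\tilde\varphi_k(v_0)=v$, the restriction of $\tilde\varphi_k$ to each $(k-1)$-dimensional face of $\Delta^k$ is the distinguished characteristic map of some $(k-1)$-cell of $\mathcal E$, and $f^S\circ\tilde\varphi_k=\varphi_k$. Moreover $\tilde\varphi_k$ is continuous, so it is the attaching map of a new $k$-cell rooted at $v$ making $\mathcal E\cup_{\tilde\varphi_k}\Delta^k$ a $\Delta$-complex.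
   Context: A $\Delta$-complex is a CW-complex in which each $k$-cell $c$ has a distinguished characteristic map $\sigma_c\colon\Delta^k\to\mathcal C$, $\Delta^k=[v_0,\dots,v_k]$ the standard simplex with ordered vertices, such that the restriction of $\sigma_c$ to each $(k-1)$-face (identified order-preservingly with $\Delta^{k-1}$) is the distinguished characteristic map of a $(k-1)$-cell. The root of $c$ is $\alpha(c)=\sigma_c(v_0)$; a $1$-cell $e$ is directed from $\sigma_e(v_0)$ to $\sigma_e(v_1)$. Complexes are connected and finite-dimensional. An immersion is a continuous map that is a local homeomorphism onto its image and commutes with characteristic maps (each $k$-cell $d$ maps onto a $k$-cell with $f\circ\sigma_d=\sigma_{f(d)}$). $B(X,P)$ is a $\Delta$-complex with one $0$-cell, $1$-cells indexed by $X$, $k$-cells ($2\le k\le n$) indexed by $P_k$, index sets pairwise disjoint, $P=\bigcup P_k$. A complex $\mathcal C$ is labeled over $B(X,P)$ via an immersion $f_{\mathcal C}\colon\mathcal C\to B(X,P)$, and $\ell(c)$ is the index of $f_{\mathcal C}(c)$; an immersion $g\colon\mathcal D\to\mathcal C$ commutes with labelings if $f_{\mathcal C}\circ g=f_{\mathcal D}$. Boundary labels: for a $k$-cell $c$ ($k\ge2$) with characteristic map $\sigma$, let $c_i$ be the $(k-1)$-cell whose characteristic map is $\sigma$ restricted to the face omitting $v_i$, and $e(c)=\sigma([v_0,v_1])$; $bl(c)=\ell(\sigma[v_0,v_1])\ell(\sigma[v_1,v_2])\ell(\sigma[v_0,v_2])^{-1}$ if $k=2$, and $bl(c)=\ell(c_k)\cdots\ell(c_1)\ell(e(c))\ell(c_0)\ell(e(c))^{-1}$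 if $k\ge3$; $bl(\rho)$ is the boundary label of the cell of $B(X,P)$ labeled $\rho$. $M(X,P)$ is the inverse monoid presented by generators $X\cup P$ and relations $\rho^2=\rho$, $\rho=\rho\,bl(\rho)$ for $\rho\in P$. For $N\subseteq M(X,P)$, $N^\omega=\{m: m\ge n \text{ for some } n\in N\}$ (natural partial order $a\le b$ iff $a=eb$, $e$ idempotent); $N$ is closed if $N=N^\omega$. For a closed inverse submonoid $H$, a right $\omega$-coset is a set $(Hm)^\omega$ with $mm^{-1}\in H$; the $\omega$-coset graph $\Gamma_H$ has the right $\omega$-cosets as vertices and an edge labeled $a\in X\cup X^{-1}\cup P$ from $(Hm)^\omega$ to $(Hma)^\omega$ whenever the latter is a right $\omega$-coset. For a labeled complex $\mathcal E$, the graph $\Gamma_{\mathcal E}$ has vertex set the $0$-cells, for each $1$-cell $e$ an edge from $\alpha(e)$ to $\omega(e)$ labeled $\ell(e)$ together with an inverse edge labeled $\ell(e)^{-1}$, and for each cell $c$ of dimension $\ge2$ a loop at $\alpha(c)$ labeled $\ell(c)$. *)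

theory Defs
  imports Main
begin

section \<open>Delta-complexes, combinatorially (semi-simplicial sets)\<close>

text \<open>A cell c of dimension k has faces face K c i (0 <= i <= k): the cell whose
 characteristic map is sigma_c restricted to the face omitting v_i.\<close>

record 'c dcx =
  cells :: "'c set"
  cdim  :: "'c \<Rightarrow> nat"
  face  :: "'c \<Rightarrow> nat \<Rightarrow> 'c"

definition verts :: "'c dcx \<Rightarrow> 'c set" where
  "verts K = {c \<in> cells K. cdim K c = 0}"

text \<open>root: sigma_c(v_0), obtained by repeatedly omitting the top vertex.\<close>
fun rootf :: "'c dcx \<Rightarrow> nat \<Rightarrow> 'c \<Rightarrow> 'c" where
  "rootf K 0 c = c"
| "rootf K (Suc n) c = rootf K n (face K c (Suc n))"

definition root :: "'c dcx \<Rightarrow> 'c \<Rightarrow> 'c" where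
  "root K c = rootf K (cdim K c) c"

text \<open>vertex sigma_c(v_i)\<close>
fun vtxf :: "'c dcx \<Rightarrow> nat \<Rightarrow> 'c \<Rightarrow> nat \<Rightarrow> 'c" where
  "vtxf K 0 c i = c"
| "vtxf K (Suc n) c i =
     (if i \<le> n then vtxf K n (face K c (Suc n)) i else vtxf K n (face K c 0) n)"

definition vert :: "'c dcx \<Rightarrow> 'c \<Rightarrow> nat \<Rightarrow> 'c" where
  "vert K c i = vtxf K (cdim K c) c i"

text \<open>e(c) = sigma_c([v_0,v_1])\<close>
fun e01f :: "'c dcx \<Rightarrow> nat \<Rightarrow> 'c \<Rightarrow> 'c" where
  "e01f K 0 c = c"
| "e01f K (Suc 0) c = c"
| "e01f K (Suc (Suc n)) c = e01f K (Suc n) (face K c (Suc (Suc n)))"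

definition e01 :: "'c dcx \<Rightarrow> 'c \<Rightarrow> 'c" where
  "e01 K c = e01f K (cdim K c) c"

text \<open>1-skeleton adjacency: a 1-cell e goes from face e 1 = sigma_e(v_0) to face e 0 = sigma_e(v_1).\<close>
definition adj :: "'c dcx \<Rightarrow> ('c \<times> 'c) set" where
  "adj K = {(face K e 1, face K e 0) | e. e \<in> cells K \<and> cdim K e = 1}"

definition is_dcx :: "'c dcx \<Rightarrow> bool" where
  "is_dcx K \<longleftrightarrow>
     (\<forall>c\<in>cells K. \<forall>i\<le>cdim K c. 0 < cdim K c \<longrightarrow>
          face K c i \<in> cells K \<and> cdim K (face K c i) = cdim K c - 1)
   \<and> (\<forall>c\<in>cells K. \<forall>i j. i < j \<and> j \<le> cdim K c \<and> 2 \<le> cdim K c \<longrightarrow>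
          face K (face K c j) i = face K (face K c i) (j - 1))
   \<and> (\<exists>N. \<forall>c\<in>cells K. cdim K c \<le> N)
   \<and> verts K \<noteq> {}
   \<and> (\<forall>x\<in>verts K. \<forall>y\<in>verts K. (x, y) \<in> (adj K \<union> (adj K)\<inverse>)\<^sup>*)"

text \<open>Immersion: dimension- and face-preserving cell map, locally injective
 (two distinct cells of the same dimension sharing the vertex at the same
 position v_i have distinct images).\<close>
definition is_imm :: "'c dcx \<Rightarrow> 'd dcx \<Rightarrow> ('c \<Rightarrow> 'd) \<Rightarrow> bool" where
  "is_imm D C f \<longleftrightarrow>
     (\<forall>c\<in>cells D. f c \<in> cells C \<and> cdim C (f c) = cdim D c
        \<and> (\<forall>i\<le>cdim D c. 0 < cdim D c \<longrightarrow> f (face D c i) = face C (f c) i))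
   \<and> (\<forall>c\<in>cells D. \<forall>c'\<in>cells D. \<forall>i. c \<noteq> c' \<and> cdim D c = cdim D c' \<and> i \<le> cdim D c
        \<and> vert D c i = vert D c' i \<longrightarrow> f c \<noteq> f c')"

definition Pall :: "(nat \<Rightarrow> 'l set) \<Rightarrow> nat \<Rightarrow> 'l set" where
  "Pall P n = (\<Union>k\<in>{2..n}. P k)"

text \<open>B(X,P): one 0-cell b0, 1-cells indexed by X, k-cells indexed by P k (2<=k<=n);
 cells of B are identified with their indices.\<close>
definition is_B :: "'l dcx \<Rightarrow> 'l set \<Rightarrow> (nat \<Rightarrow> 'l set) \<Rightarrow> nat \<Rightarrow> 'l \<Rightarrow> bool" where
  "is_B B X P n b0 \<longleftrightarrow> is_dcx B
     \<and> cells B = {b0} \<union> X \<union> Pall P n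
     \<and> cdim B b0 = 0
     \<and> (\<forall>x\<in>X. cdim B x = 1)
     \<and> (\<forall>k\<in>{2..n}. \<forall>\<rho>\<in>P k. cdim B \<rho> = k)"

text \<open>A labeled complex: ell is the immersion into B; the label of c is ell c.\<close>
definition is_labeled :: "'c dcx \<Rightarrow> 'l dcx \<Rightarrow> ('c \<Rightarrow> 'l) \<Rightarrow> bool" where
  "is_labeled K B ell \<longleftrightarrow> is_dcx K \<and> is_imm K B ell"

type_synonym 'l word = "('l \<times> bool) list"   (* (a,True) = a, (a,False) = a^-1 *)

definition winv :: "'l word \<Rightarrow> 'l word" where
  "winv w = rev (map (\<lambda>(a, b). (a, \<not> b)) w)"

definition bl :: "'l dcx \<Rightarrow> 'l \<Rightarrow> 'l word" where
  "bl B \<rho> = (let k = cdim B \<rho> in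
     if k = 2 then [(face B \<rho> 2, True), (face B \<rho> 0, True), (face B \<rho> 1, False)]
     else map (\<lambda>i. (face B \<rho> i, True)) (rev [1..<k+1])
          @ [(e01 B \<rho>, True), (face B \<rho> 0, True), (e01 B \<rho>, False)])"

definition alph :: "'l set \<Rightarrow> 'l set \<Rightarrow> ('l \<times> bool) set" where
  "alph X PP = (X \<union> PP) \<times> UNIV"

text \<open>Congruence on words presenting M(X,P) as an inverse monoid:
 Wagner's relations plus rho^2 = rho and rho = rho bl(rho).\<close>
inductive mc :: "'l dcx \<Rightarrow> 'l set \<Rightarrow> 'l set \<Rightarrow> 'l word \<Rightarrow> 'l word \<Rightarrow> bool"
  for B X PP where
  mc_refl: "w \<in> lists (alph X PP) \<Longrightarrow> mc B X PP w w"
| mc_sym: "mc B X PP u v \<Longrightarrow> mc B X PP v u"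
| mc_trans: "mc B X PP u v \<Longrightarrow> mc B X PP v w \<Longrightarrow> mc B X PP u w"
| mc_ctx: "mc B X PP u v \<Longrightarrow> x \<in> lists (alph X PP) \<Longrightarrow> y \<in> lists (alph X PP)
            \<Longrightarrow> mc B X PP (x @ u @ y) (x @ v @ y)"
| mc_ax1: "w \<in> lists (alph X PP) \<Longrightarrow> mc B X PP (w @ winv w @ w) w"
| mc_ax2: "w \<in> lists (alph X PP) \<Longrightarrow> z \<in> lists (alph X PP) \<Longrightarrow>
            mc B X PP (w @ winv w @ z @ winv z) (z @ winv z @ w @ winv w)"
| mc_idem: "\<rho> \<in> PP \<Longrightarrow> mc B X PP [(\<rho>, True), (\<rho>, True)] [(\<rho>, True)]"
| mc_bl: "\<rho> \<in> PP \<Longrightarrow> mc B X PP [(\<rho>, True)] ((\<rho>, True) # bl B \<rho>)"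

text \<open>Elements of M(X,P) are congruence classes of words.\<close>
type_synonym 'l mel = "'l word set"

definition mclass :: "'l dcx \<Rightarrow> 'l set \<Rightarrow> 'l set \<Rightarrow> 'l word \<Rightarrow> 'l mel" where
  "mclass B X PP w = {v. mc B X PP w v}"

definition Mset :: "'l dcx \<Rightarrow> 'l set \<Rightarrow> 'l set \<Rightarrow> 'l mel set" where
  "Mset B X PP = mclass B X PP ` lists (alph X PP)"

definition mmul :: "'l dcx \<Rightarrow> 'l set \<Rightarrow> 'l set \<Rightarrow> 'l mel \<Rightarrow> 'l mel \<Rightarrow> 'l mel" where
  "mmul B X PP a b = {v. \<exists>x\<in>a. \<exists>y\<in>b. mc B X PP (x @ y) v}"

definition minv :: "'l dcx \<Rightarrow> 'l set \<Rightarrow> 'l set \<Rightarrow> 'l mel \<Rightarrow> 'l mel" where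
  "minv B X PP a = {v. \<exists>x\<in>a. mc B X PP (winv x) v}"

definition mleq :: "'l dcx \<Rightarrow> 'l set \<Rightarrow> 'l set \<Rightarrow> 'l mel \<Rightarrow> 'l mel \<Rightarrow> bool" where
  "mleq B X PP a b \<longleftrightarrow> (\<exists>e\<in>Mset B X PP. mmul B X PP e e = e \<and> a = mmul B X PP e b)"

definition omega :: "'l dcx \<Rightarrow> 'l set \<Rightarrow> 'l set \<Rightarrow> 'l mel set \<Rightarrow> 'l mel set" where
  "omega B X PP N = {m \<in> Mset B X PP. \<exists>n\<in>N. mleq B X PP n m}"

definition closed_inv_submonoid :: "'l dcx \<Rightarrow> 'l set \<Rightarrow> 'l set \<Rightarrow> 'l mel set \<Rightarrow> bool" where
  "closed_inv_submonoid B X PP H \<longleftrightarrow>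
     H \<subseteq> Mset B X PP \<and> mclass B X PP [] \<in> H
   \<and> (\<forall>a\<in>H. \<forall>b\<in>H. mmul B X PP a b \<in> H) \<and> (\<forall>a\<in>H. minv B X PP a \<in> H)
   \<and> omega B X PP H = H"

definition rmul :: "'l dcx \<Rightarrow> 'l set \<Rightarrow> 'l set \<Rightarrow> 'l mel set \<Rightarrow> 'l mel \<Rightarrow> 'l mel set" where
  "rmul B X PP H m = (\<lambda>h. mmul B X PP h m) ` H"

definition is_coset :: "'l dcx \<Rightarrow> 'l set \<Rightarrow> 'l set \<Rightarrow> 'l mel set \<Rightarrow> 'l mel set \<Rightarrow> bool" where
  "is_coset B X PP H R \<longleftrightarrow> (\<exists>m\<in>Mset B X PP. mmul B X PP m (minv B X PP m) \<in> H
       \<and> R = omega B X PP (rmul B X PP H m))"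

text \<open>edges of the omega-coset graph Gamma_H; labels in X, X^-1 (second component False) and P\<close>
definition GH_edges :: "'l dcx \<Rightarrow> 'l set \<Rightarrow> 'l set \<Rightarrow> 'l mel set
     \<Rightarrow> ('l mel set \<times> ('l \<times> bool) \<times> 'l mel set) set" where
  "GH_edges B X PP H = {(R1, a, R2). a \<in> (X \<times> UNIV) \<union> (PP \<times> {True})
      \<and> (\<exists>m\<in>Mset B X PP. mmul B X PP m (minv B X PP m) \<in> H
           \<and> R1 = omega B X PP (rmul B X PP H m)
           \<and> R2 = omega B X PP (rmul B X PP H (mmul B X PP m (mclass B X PP [a]))))
      \<and> is_coset B X PP H R2}"

text \<open>edge indices: each 1-cell gives an edge (True) and its inverse (False);
 each cell of dimension >= 2 gives a loop at its root.\<close>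
definition GE_idx :: "'e dcx \<Rightarrow> ('e \<times> bool) set" where
  "GE_idx E = {(e, b). e \<in> cells E \<and> cdim E e = 1}
            \<union> {(c, True) | c. c \<in> cells E \<and> 2 \<le> cdim E c}"

definition GE_edge :: "'e dcx \<Rightarrow> ('e \<Rightarrow> 'l) \<Rightarrow> ('e \<Rightarrow> 'v) \<Rightarrow> 'e \<times> bool \<Rightarrow> 'v \<times> ('l \<times> bool) \<times> 'v" where
  "GE_edge E ell \<iota> co = (case co of (c, b) \<Rightarrow>
     if cdim E c = 1 then
       (if b then (\<iota> (face E c 1), (ell c, True), \<iota> (face E c 0))
        else (\<iota> (face E c 0), (ell c, False), \<iota> (face E c 1)))
     else (\<iota> (root E c), (ell c, True), \<iota> (root E c)))"

text \<open>d i (i <= k) is the (k-1)-cell of E whose characteristic map is the restriction of the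
 lifted map to the face of Delta^k omitting v_i.  The compatibility condition says these glue
 to a well-defined map on the boundary of Delta^k.\<close>
definition lift_ok :: "'e dcx \<Rightarrow> 'c dcx \<Rightarrow> ('e \<Rightarrow> 'c) \<Rightarrow> 'c \<Rightarrow> nat \<Rightarrow> 'e \<Rightarrow> (nat \<Rightarrow> 'e) \<Rightarrow> bool" where
  "lift_ok E C f Ck k u d \<longleftrightarrow>
     (\<forall>i\<le>k. d i \<in> cells E \<and> cdim E (d i) = k - 1 \<and> f (d i) = face C Ck i)
   \<and> (\<forall>i j. i < j \<and> j \<le> k \<longrightarrow> face E (d j) i = face E (d i) (j - 1))
   \<and> (\<forall>j\<in>{1..k}. root E (d j) = u)"

text \<open>E with a new k-cell (None) attached along d\<close>
definition attach :: "'e dcx \<Rightarrow> nat \<Rightarrow> (nat \<Rightarrow> 'e) \<Rightarrow> 'e option dcx" where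
  "attach E k d = \<lparr> cells = Some ` cells E \<union> {None},
     cdim = (\<lambda>x. case x of None \<Rightarrow> k | Some c \<Rightarrow> cdim E c),
     face = (\<lambda>x i. case x of None \<Rightarrow> Some (d i) | Some c \<Rightarrow> Some (face E c i)) \<rparr>"

end

theory Submission
  imports Defs
begin

text \<open>Let m represent the \<omega>-coset \<iota> u, so that the loop labelled \<rho> at u says
  (H m \<rho>)^\<omega> = (H m)^\<omega>.  The relation \<rho> = \<rho> bl(\<rho>), together with the fact that
  idempotents of an inverse monoid commute, shows that the letters of bl(\<rho>) act on this coset
  as the boundary of \<Delta>^k prescribes: for k \<ge> 3 the faces \<rho>_1, ..., \<rho>_k label loops at u
  and \<rho>_0 labels a loop at the end of the edge e(\<rho>_k); for k = 2 the three edge letters label a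
  triangle at u that closes up.  All these edges of \<Gamma>_H carry labels of dimension below k, so
  they lie in S and come from cells of E.  Finally, f^S is an immersion: two cells of E with the
  same image that share a vertex in the same position are equal.  This forces the chosen cells to
  agree on common faces, so they glue to a new k-cell, and it makes the lift unique.\<close>

section \<open>Inverse monoids\<close>

text \<open>Wagner's axioms, the same ones that generate the congruence presenting M(X,P).\<close>

locale inverse_monoid =
  fixes M :: "'a set" and mul :: "'a \<Rightarrow> 'a \<Rightarrow> 'a" (infixl "\<cdot>" 70)
    and iv :: "'a \<Rightarrow> 'a" and one :: 'a
  assumes mul_closed[simp]: "x \<in> M \<Longrightarrow> y \<in> M \<Longrightarrow> x \<cdot> y \<in> M"
    and iv_closed[simp]: "x \<in> M \<Longrightarrow> iv x \<in> M"
    and one_closed[simp]: "one \<in> M"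
    and assoc[simp]: "x \<in> M \<Longrightarrow> y \<in> M \<Longrightarrow> z \<in> M \<Longrightarrow> (x \<cdot> y) \<cdot> z = x \<cdot> (y \<cdot> z)"
    and left_unit[simp]: "x \<in> M \<Longrightarrow> one \<cdot> x = x"
    and right_unit[simp]: "x \<in> M \<Longrightarrow> x \<cdot> one = x"
    and iv_iv[simp]: "x \<in> M \<Longrightarrow> iv (iv x) = x"
    and iv_mul[simp]: "x \<in> M \<Longrightarrow> y \<in> M \<Longrightarrow> iv (x \<cdot> y) = iv y \<cdot> iv x"
    and mul_iv_mul: "x \<in> M \<Longrightarrow> x \<cdot> (iv x \<cdot> x) = x"
    and mul_iv_commute: "x \<in> M \<Longrightarrow> y \<in> M \<Longrightarrow> x \<cdot> (iv x \<cdot> (y \<cdot> iv y)) = y \<cdot> (iv y \<cdot> (x \<cdot> iv x))"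
begin

definition idem :: "'a \<Rightarrow> bool" where
  "idem f \<longleftrightarrow> f \<in> M \<and> f \<cdot> f = f"

lemma idem_closed: "idem f \<Longrightarrow> f \<in> M"
  by (simp add: idem_def)

lemma idem_mul_self_left: "idem f \<Longrightarrow> z \<in> M \<Longrightarrow> f \<cdot> (f \<cdot> z) = f \<cdot> z"
  by (metis assoc idem_def)

lemma mul_iv_mul_left: "x \<in> M \<Longrightarrow> z \<in> M \<Longrightarrow> x \<cdot> (iv x \<cdot> (x \<cdot> z)) = x \<cdot> z"
  by (metis mul_iv_mul assoc iv_closed mul_closed)

lemma idem_mul_iv: "x \<in> M \<Longrightarrow> idem (x \<cdot> iv x)"
  unfolding idem_def by (simp add: mul_iv_mul_left)

lemma idem_one: "idem one"
  by (simp add: idem_def)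

lemma idem_iv: assumes "idem f" shows "iv f = f"
proof -
  have f: "f \<in> M" "f \<cdot> f = f" using assms by (auto simp: idem_def)
  let ?p = "f \<cdot> iv f" and ?q = "iv f \<cdot> f"
  have A: "f \<cdot> ?p = ?p" by (metis f assoc iv_closed)
  have B: "?q \<cdot> f = ?q" by (metis f assoc iv_closed)
  have "f = f \<cdot> f" using f by simp
  also have "\<dots> = (f \<cdot> ?q) \<cdot> (?p \<cdot> f)" using f mul_iv_mul by simp
  also have "\<dots> = f \<cdot> (?q \<cdot> ?p) \<cdot> f" using f by simp
  also have "?q \<cdot> ?p = ?p \<cdot> ?q" using mul_iv_commute[of "iv f" f] f by simp
  also have "f \<cdot> (?p \<cdot> ?q) \<cdot> f = (f \<cdot> ?p) \<cdot> (?q \<cdot> f)" using f by simp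
  finally have f_eq: "f = ?p \<cdot> ?q" using A B by simp
  have fi: "iv f \<cdot> iv f = iv f" by (metis f iv_mul)
  have A': "iv f \<cdot> ?q = ?q" by (metis fi f assoc iv_closed)
  have B': "?p \<cdot> iv f = ?p" by (metis fi f assoc iv_closed)
  have "iv f = iv f \<cdot> iv f" using fi by simp
  also have "\<dots> = (iv f \<cdot> ?p) \<cdot> (?q \<cdot> iv f)" using f mul_iv_mul[of "iv f"] by simp
  also have "\<dots> = iv f \<cdot> (?p \<cdot> ?q) \<cdot> iv f" using f by simp
  also have "?p \<cdot> ?q = ?q \<cdot> ?p" using mul_iv_commute[of "iv f" f] f by simp
  also have "iv f \<cdot> (?q \<cdot> ?p) \<cdot> iv f = (iv f \<cdot> ?q) \<cdot> (?p \<cdot> iv f)" using f by simp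
  finally have "iv f = ?q \<cdot> ?p" using A' B' by simp
  also have "\<dots> = ?p \<cdot> ?q" using mul_iv_commute[of "iv f" f] f by simp
  finally show ?thesis using f_eq by simp
qed

lemma idem_eq_mul_iv: "idem f \<Longrightarrow> f = f \<cdot> iv f"
  using idem_iv by (simp add: idem_def)

lemma idem_commute: assumes "idem f" "idem g" shows "f \<cdot> g = g \<cdot> f"
proof -
  have M: "f \<in> M" "g \<in> M" using assms by (auto simp: idem_def)
  have "f \<cdot> g = (f \<cdot> iv f) \<cdot> (g \<cdot> iv g)" using idem_eq_mul_iv assms by metis
  also have "\<dots> = (g \<cdot> iv g) \<cdot> (f \<cdot> iv f)" using mul_iv_commute M by simp
  also have "\<dots> = g \<cdot> f" using idem_eq_mul_iv assms by metis
  finally show ?thesis .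
qed

lemma idem_mul: assumes "idem f" "idem g" shows "idem (f \<cdot> g)"
proof -
  have M: "f \<in> M" "g \<in> M" using assms by (auto simp: idem_def)
  have "f \<cdot> g \<cdot> (f \<cdot> g) = f \<cdot> (g \<cdot> f) \<cdot> g" using M by simp
  also have "\<dots> = (f \<cdot> f) \<cdot> (g \<cdot> g)" using idem_commute assms M by simp
  finally show ?thesis using assms M by (simp add: idem_def) (metis assoc)
qed

lemma idem_conj: assumes "x \<in> M" "idem f" shows "idem (x \<cdot> f \<cdot> iv x)"
proof -
  have f: "f \<in> M" "f \<cdot> f = f" using assms by (auto simp: idem_def)
  have comm: "f \<cdot> (iv x \<cdot> x) = (iv x \<cdot> x) \<cdot> f"
    using idem_commute[OF assms(2) idem_mul_iv[of "iv x"]] assms by simp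
  have "x \<cdot> f \<cdot> iv x \<cdot> (x \<cdot> f \<cdot> iv x) = x \<cdot> (f \<cdot> (iv x \<cdot> x)) \<cdot> f \<cdot> iv x" using f assms by simp
  also have "\<dots> = (x \<cdot> (iv x \<cdot> x)) \<cdot> (f \<cdot> f) \<cdot> iv x" using f assms comm by simp
  finally show ?thesis using assms f mul_iv_mul by (simp add: idem_def)
qed

lemma mul_idem_eq_conj_mul: assumes "x \<in> M" "idem f" shows "x \<cdot> f = (x \<cdot> f \<cdot> iv x) \<cdot> x"
proof -
  have f: "f \<in> M" using assms by (auto simp: idem_def)
  have "(x \<cdot> f \<cdot> iv x) \<cdot> x = x \<cdot> (f \<cdot> (iv x \<cdot> x))" using f assms by simp
  also have "f \<cdot> (iv x \<cdot> x) = (iv x \<cdot> x) \<cdot> f"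
    using idem_commute[OF assms(2) idem_mul_iv[of "iv x"]] assms by simp
  also have "x \<cdot> (iv x \<cdot> x \<cdot> f) = x \<cdot> f" using f assms by (simp add: mul_iv_mul_left)
  finally show ?thesis by simp
qed

lemma idem_absorb_iv: assumes "idem f" "a \<in> M" "f \<cdot> a = f" shows "f \<cdot> iv a = f"
proof -
  have f: "f \<in> M" "iv f = f" using assms(1) idem_iv by (auto simp: idem_def)
  have "f = f \<cdot> iv f" using idem_eq_mul_iv assms(1) by simp
  also have "\<dots> = f \<cdot> a \<cdot> iv (f \<cdot> a)" by (simp only: assms(3))
  also have "\<dots> = f \<cdot> ((a \<cdot> iv a) \<cdot> f)" using f assms(2) by simp
  also have "(a \<cdot> iv a) \<cdot> f = f \<cdot> (a \<cdot> iv a)" using idem_commute idem_mul_iv assms(1,2) by simp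
  also have "f \<cdot> (f \<cdot> (a \<cdot> iv a)) = (f \<cdot> a) \<cdot> iv a" using idem_mul_self_left f assms(1,2) by simp
  finally show ?thesis by (simp only: assms(3))
qed

definition prod :: "'a list \<Rightarrow> 'a" where
  "prod fs = foldr (\<cdot>) fs one"

lemma prod_Nil[simp]: "prod [] = one" and prod_Cons[simp]: "prod (f # fs) = f \<cdot> prod fs"
  by (simp_all add: prod_def)

lemma idem_prod: "\<forall>f\<in>set fs. idem f \<Longrightarrow> idem (prod fs)"
  by (induction fs) (auto intro: idem_one idem_mul)

lemma prod_absorb: assumes "\<forall>f\<in>set fs. idem f" "g \<in> set fs" shows "prod fs \<cdot> g = prod fs"
  using assms
proof (induction fs)
  case Nil then show ?case by simp
next
  case (Cons f fs)
  have f: "idem f" "f \<in> M" and pf: "idem (prod fs)" "prod fs \<in> M" and g: "g \<in> M"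
    using Cons.prems idem_prod[of fs] by (auto simp: idem_def)
  show ?case
  proof (cases "g \<in> set fs")
    case True then show ?thesis using Cons f pf g by simp
  next
    case False
    then have "g = f" using Cons.prems by simp
    then have "prod (f # fs) \<cdot> g = f \<cdot> (f \<cdot> prod fs)"
      using idem_commute[OF pf(1) f(1)] f pf by simp
    then show ?thesis using idem_mul_self_left f pf by simp
  qed
qed

definition le :: "'a \<Rightarrow> 'a \<Rightarrow> bool" where
  "le a b \<longleftrightarrow> (\<exists>f\<in>M. f \<cdot> f = f \<and> a = f \<cdot> b)"

lemma leI: "idem f \<Longrightarrow> a = f \<cdot> b \<Longrightarrow> le a b"
  unfolding le_def idem_def by auto

lemma leE: "le a b \<Longrightarrow> (\<And>f. idem f \<Longrightarrow> a = f \<cdot> b \<Longrightarrow> thesis) \<Longrightarrow> thesis"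
  unfolding le_def idem_def by auto

lemma le_refl: "b \<in> M \<Longrightarrow> le b b"
  by (rule leI[OF idem_one]) simp

lemma le_closed: "le a b \<Longrightarrow> b \<in> M \<Longrightarrow> a \<in> M"
  by (auto elim: leE simp: idem_closed)

lemma le_trans: assumes "le a b" "le b c" "c \<in> M" shows "le a c"
proof -
  obtain f where f: "idem f" "a = f \<cdot> b" using assms(1) by (rule leE)
  obtain g where g: "idem g" "b = g \<cdot> c" using assms(2) by (rule leE)
  show ?thesis
    by (rule leI[OF idem_mul[OF f(1) g(1)]]) (simp add: f g idem_closed assms)
qed

lemma le_antisym: assumes "le a b" "le b a" "b \<in> M" shows "a = b"
proof -
  obtain f where f: "idem f" "a = f \<cdot> b" using assms(1) by (rule leE)
  obtain g where g: "idem g" "b = g \<cdot> a" using assms(2) by (rule leE)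
  have fg: "f \<in> M" "g \<in> M" "g \<cdot> g = g" using f g by (auto simp: idem_def)
  have a: "a \<in> M" using le_closed assms by blast
  have gb: "g \<cdot> b = b"
  proof -
    have "g \<cdot> b = (g \<cdot> g) \<cdot> a" by (simp only: g(2) assoc[OF fg(2) fg(2) a])
    also have "\<dots> = b" by (simp only: fg(3) g(2))
    finally show ?thesis .
  qed
  have "b = g \<cdot> (f \<cdot> b)" using f g by simp
  also have "\<dots> = (g \<cdot> f) \<cdot> b" using fg assms by simp
  also have "g \<cdot> f = f \<cdot> g" using idem_commute f g by simp
  also have "(f \<cdot> g) \<cdot> b = a" using fg assms gb f by simp
  finally show ?thesis by simp
qed

lemma le_mul_right: assumes "le a b" "b \<in> M" "c \<in> M" shows "le (a \<cdot> c) (b \<cdot> c)"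
  using assms by (auto elim!: leE intro!: leI simp: idem_closed)

lemma le_mul_left: assumes "le a b" "b \<in> M" "c \<in> M" shows "le (c \<cdot> a) (c \<cdot> b)"
proof -
  obtain f where f: "idem f" "a = f \<cdot> b" using assms by (auto elim: leE)
  have "c \<cdot> a = (c \<cdot> f) \<cdot> b" using f assms idem_closed by simp
  also have "c \<cdot> f = (c \<cdot> f \<cdot> iv c) \<cdot> c" using mul_idem_eq_conj_mul assms f by simp
  finally have "c \<cdot> a = (c \<cdot> f \<cdot> iv c) \<cdot> (c \<cdot> b)" using assms f idem_closed by simp
  then show ?thesis by (rule leI[OF idem_conj[OF assms(3) f(1)]])
qed

lemma le_mul_idem: assumes "a \<in> M" "idem f" shows "le (a \<cdot> f) a"
  using mul_idem_eq_conj_mul[OF assms] idem_conj[OF assms] by (rule leI[rotated])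

lemma le_iv: assumes "le a b" "b \<in> M" shows "le (iv a) (iv b)"
proof -
  obtain f where f: "idem f" "a = f \<cdot> b" using assms by (auto elim: leE)
  have "iv a = iv b \<cdot> f" using f assms idem_iv idem_closed by simp
  then show ?thesis using le_mul_idem[of "iv b" f] assms f by simp
qed

lemma le_mul_iv: assumes "le a b" "b \<in> M" shows "le (a \<cdot> iv a) (b \<cdot> iv b)"
proof -
  have a: "a \<in> M" using le_closed assms by blast
  have "le (a \<cdot> iv a) (b \<cdot> iv a)" using le_mul_right assms a by simp
  moreover have "le (b \<cdot> iv a) (b \<cdot> iv b)" using le_mul_left le_iv assms by simp
  ultimately show ?thesis using le_trans assms a by (meson iv_closed mul_closed)
qed

lemma idem_absorb_quotient:
  assumes "idem r" "a \<in> M" "b \<in> M" "r \<cdot> (a \<cdot> iv b) = r"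
  shows "r \<cdot> b = r \<cdot> a"
proof (rule le_antisym)
  have r: "r \<in> M" using assms(1) idem_closed by blast
  have "r \<cdot> b = r \<cdot> (a \<cdot> iv b) \<cdot> b" by (simp only: assms(4))
  also have "\<dots> = (r \<cdot> a) \<cdot> (iv b \<cdot> b)" using r assms(2,3) by simp
  finally have "r \<cdot> b = (r \<cdot> a) \<cdot> (iv b \<cdot> b)" .
  then show "le (r \<cdot> b) (r \<cdot> a)"
    using le_mul_idem[of "r \<cdot> a" "iv b \<cdot> b"] idem_mul_iv[of "iv b"] r assms(2,3) by simp
  have "r \<cdot> iv (a \<cdot> iv b) = r" using idem_absorb_iv[OF assms(1) _ assms(4)] assms(2,3) by simp
  then have "r \<cdot> (b \<cdot> iv a) = r" using assms(2,3) by simp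
  then have "r \<cdot> a = r \<cdot> (b \<cdot> iv a) \<cdot> a" by simp
  also have "\<dots> = (r \<cdot> b) \<cdot> (iv a \<cdot> a)" using r assms(2,3) by simp
  finally have "r \<cdot> a = (r \<cdot> b) \<cdot> (iv a \<cdot> a)" .
  then show "le (r \<cdot> a) (r \<cdot> b)"
    using le_mul_idem[of "r \<cdot> b" "iv a \<cdot> a"] idem_mul_iv[of "iv a"] r assms(2,3) by simp
  show "r \<cdot> a \<in> M" using r assms(2) by simp
qed

lemma absorb_idem_factor:
  assumes "r \<in> M" "idem f" "idem g" "idem l" "f \<cdot> l = f" "r \<cdot> (f \<cdot> g) = r"
  shows "r \<cdot> l = r"
proof -
  have M: "f \<in> M" "g \<in> M" "l \<in> M" using assms(2-4) idem_closed by auto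
  have "r \<cdot> l = r \<cdot> (f \<cdot> g) \<cdot> l" by (simp only: assms(6))
  also have "\<dots> = r \<cdot> (f \<cdot> (g \<cdot> l))" using assms(1) M by simp
  also have "g \<cdot> l = l \<cdot> g" using idem_commute assms(3,4) by simp
  also have "f \<cdot> (l \<cdot> g) = (f \<cdot> l) \<cdot> g" using M by simp
  also have "\<dots> = f \<cdot> g" by (simp only: assms(5))
  finally show ?thesis by (simp only: assms(6))
qed

lemma conj_idem_absorb:
  assumes "s \<in> M" "x \<in> M" "idem f" "r = s \<cdot> (x \<cdot> f \<cdot> iv x)"
  shows "r \<cdot> x \<cdot> f = r \<cdot> x"
proof -
  have f: "f \<in> M" "f \<cdot> f = f" using assms by (auto simp: idem_def)
  let ?e = "iv x \<cdot> x"
  have e: "idem ?e" using idem_mul_iv[of "iv x"] assms by simp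
  have "r \<cdot> x \<cdot> f = (s \<cdot> x \<cdot> f) \<cdot> (?e \<cdot> f)" using assms f by simp
  also have "?e \<cdot> f = f \<cdot> ?e" using idem_commute[OF e assms(3)] .
  also have "(s \<cdot> x \<cdot> f) \<cdot> (f \<cdot> ?e) = r \<cdot> x"
    using assms f by (simp add: idem_mul_self_left[OF assms(3)])
  finally show ?thesis .
qed

definition up :: "'a set \<Rightarrow> 'a set" where
  "up N = {m \<in> M. \<exists>n\<in>N. le n m}"

definition rcoset :: "'a set \<Rightarrow> 'a \<Rightarrow> 'a set" where
  "rcoset H m = (\<lambda>h. h \<cdot> m) ` H"

definition closed_submonoid :: "'a set \<Rightarrow> bool" where
  "closed_submonoid H \<longleftrightarrow> H \<subseteq> M \<and> one \<in> H \<and> (\<forall>a\<in>H. \<forall>b\<in>H. a \<cdot> b \<in> H)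
     \<and> (\<forall>a\<in>H. iv a \<in> H) \<and> up H = H"

context
  fixes H assumes H: "closed_submonoid H"
begin

lemma closed_submonoid_subset: "H \<subseteq> M"
  and closed_submonoid_one: "one \<in> H"
  and closed_submonoid_mul: "a \<in> H \<Longrightarrow> b \<in> H \<Longrightarrow> a \<cdot> b \<in> H"
  and closed_submonoid_iv: "a \<in> H \<Longrightarrow> iv a \<in> H"
  and closed_submonoid_up: "h \<in> H \<Longrightarrow> le h x \<Longrightarrow> x \<in> M \<Longrightarrow> x \<in> H"
  using H unfolding closed_submonoid_def up_def by blast+

lemma mem_up_rcoset_iff: "x \<in> up (rcoset H m) \<longleftrightarrow> x \<in> M \<and> (\<exists>h\<in>H. le (h \<cdot> m) x)"
  by (auto simp: up_def rcoset_def)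

lemma mem_up_rcoset: "m \<in> M \<Longrightarrow> m \<in> up (rcoset H m)"
  using closed_submonoid_one le_refl unfolding mem_up_rcoset_iff by force

lemma up_rcoset_mul:
  assumes "m1 \<in> M" "m2 \<in> M" "a \<in> M" "up (rcoset H m1) = up (rcoset H m2)"
  shows "up (rcoset H (m1 \<cdot> a)) = up (rcoset H (m2 \<cdot> a))"
proof -
  have *: "up (rcoset H (p \<cdot> a)) \<subseteq> up (rcoset H (q \<cdot> a))"
    if pq: "p \<in> M" "q \<in> M" "up (rcoset H p) = up (rcoset H q)" for p q
  proof
    fix x assume "x \<in> up (rcoset H (p \<cdot> a))"
    then obtain h where x: "x \<in> M" "h \<in> H" "le (h \<cdot> (p \<cdot> a)) x" unfolding mem_up_rcoset_iff by auto
    have "p \<in> up (rcoset H q)" using mem_up_rcoset[OF pq(1)] pq by simp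
    then obtain h' where h': "h' \<in> H" "le (h' \<cdot> q) p" unfolding mem_up_rcoset_iff by auto
    have hM: "h \<in> M" "h' \<in> M" using closed_submonoid_subset x h' by auto
    have "le (h \<cdot> (h' \<cdot> q) \<cdot> a) (h \<cdot> p \<cdot> a)"
      using le_mul_right[OF le_mul_left[OF h'(2)]] pq hM assms by simp
    then have "le ((h \<cdot> h') \<cdot> (q \<cdot> a)) (h \<cdot> (p \<cdot> a))" using pq hM assms by simp
    then have "le ((h \<cdot> h') \<cdot> (q \<cdot> a)) x" using le_trans x by blast
    moreover have "h \<cdot> h' \<in> H" using closed_submonoid_mul x h' by simp
    ultimately show "x \<in> up (rcoset H (q \<cdot> a))" using x unfolding mem_up_rcoset_iff by blast
  qed
  show ?thesis using *[of m1 m2] *[of m2 m1] assms by auto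
qed

lemma up_rcoset_eq_mul_iv_mem:
  assumes "n \<in> M" "q \<in> M" "q \<cdot> iv q \<in> H" "up (rcoset H n) = up (rcoset H q)"
  shows "n \<cdot> iv n \<in> H"
proof -
  have "n \<in> up (rcoset H q)" using mem_up_rcoset assms by auto
  then obtain h where h: "h \<in> H" "le (h \<cdot> q) n" unfolding mem_up_rcoset_iff by auto
  have hM: "h \<in> M" using h closed_submonoid_subset by auto
  have "le (h \<cdot> q \<cdot> iv (h \<cdot> q)) (n \<cdot> iv n)" using le_mul_iv h assms by simp
  moreover have "h \<cdot> q \<cdot> iv (h \<cdot> q) = h \<cdot> (q \<cdot> iv q) \<cdot> iv h" using hM assms by simp
  moreover have "h \<cdot> (q \<cdot> iv q) \<cdot> iv h \<in> H"
    using closed_submonoid_mul closed_submonoid_iv h assms by simp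
  ultimately show ?thesis using closed_submonoid_up assms by simp
qed

lemma prefix_mul_iv_mem:
  assumes "m \<in> M" "idem r" "p \<in> M" "q \<in> M" "r \<cdot> p \<cdot> q = r" "(m \<cdot> r) \<cdot> iv (m \<cdot> r) \<in> H"
  shows "(m \<cdot> p) \<cdot> iv (m \<cdot> p) \<in> H"
proof -
  have rM: "r \<in> M" using assms idem_closed by auto
  let ?a = "m \<cdot> r \<cdot> p" and ?f = "q \<cdot> iv q"
  have aM: "?a \<in> M" using assms rM by simp
  have mr: "m \<cdot> r = ?a \<cdot> q" using assms rM by (metis assoc mul_closed)
  have fi: "iv ?f = ?f" using idem_iv[OF idem_mul_iv[of q]] assms by simp
  have ff: "?f \<cdot> ?f = ?f" using idem_mul_iv[of q] assms by (simp add: idem_def)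
  have "(?a \<cdot> ?f) \<cdot> iv (?a \<cdot> ?f) = ?a \<cdot> (?f \<cdot> ?f) \<cdot> iv ?a"
    using aM assms by (simp only: iv_mul fi mul_closed iv_closed assoc)
  also have "\<dots> = (?a \<cdot> q) \<cdot> iv (?a \<cdot> q)" using aM assms ff by simp
  finally have "(m \<cdot> r) \<cdot> iv (m \<cdot> r) = (?a \<cdot> ?f) \<cdot> iv (?a \<cdot> ?f)" using mr by simp
  moreover have "le ((?a \<cdot> ?f) \<cdot> iv (?a \<cdot> ?f)) (?a \<cdot> iv ?a)"
    by (rule le_mul_iv[OF le_mul_idem[OF aM idem_mul_iv[OF assms(4)]] aM])
  moreover have "le (?a \<cdot> iv ?a) ((m \<cdot> p) \<cdot> iv (m \<cdot> p))"
    using le_mul_iv[OF le_mul_right[OF le_mul_idem[OF assms(1,2)]]] assms by simp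
  ultimately have "le ((m \<cdot> r) \<cdot> iv (m \<cdot> r)) ((m \<cdot> p) \<cdot> iv (m \<cdot> p))"
    using le_trans assms aM by (metis iv_closed mul_closed)
  then show ?thesis using closed_submonoid_up assms by simp
qed

end

end

section \<open>The inverse monoid M(X,P)\<close>

lemma winv_append[simp]: "winv (u @ v) = winv v @ winv u" by (simp add: winv_def)
lemma winv_winv[simp]: "winv (winv u) = u" by (induct u) (auto simp: winv_def)
lemma winv_Nil[simp]: "winv [] = []" by (simp add: winv_def)
lemma winv_single[simp]: "winv [(a, b)] = [(a, \<not> b)]" by (simp add: winv_def)
lemma set_winv[simp]: "set (winv w) = (\<lambda>(a, b). (a, \<not> b)) ` set w"
  by (auto simp: winv_def)

lemma winv_in_words[simp]: "winv u \<in> lists (alph X PP) \<longleftrightarrow> u \<in> lists (alph X PP)"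
  by (auto simp: winv_def alph_def)

locale presentation =
  fixes B :: "'l dcx" and X :: "'l set" and PP :: "'l set"
  assumes bl_words: "\<forall>\<rho>\<in>PP. set (bl B \<rho>) \<subseteq> alph X PP"
begin

abbreviation "Words \<equiv> lists (alph X PP)"
abbreviation "cls \<equiv> mclass B X PP"

lemma mc_words: "mc B X PP u v \<Longrightarrow> u \<in> Words \<and> v \<in> Words"
  by (induct rule: mc.induct) (use bl_words in \<open>fastforce simp: alph_def\<close>)+

lemma cls_eq_iff: "u \<in> Words \<Longrightarrow> cls u = cls v \<longleftrightarrow> mc B X PP u v"
proof
  assume "u \<in> Words" "cls u = cls v"
  then have "u \<in> cls v" unfolding mclass_def using mc_refl[of u] by (metis mem_Collect_eq)
  then show "mc B X PP u v" unfolding mclass_def by (simp add: mc_sym)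
next
  assume h: "mc B X PP u v"
  show "cls u = cls v" unfolding mclass_def
  proof (rule Collect_cong)
    fix w show "mc B X PP u w = mc B X PP v w"
      using h mc_trans[of B X PP u v w] mc_trans[of B X PP v u w] mc_sym[OF h] by blast
  qed
qed

lemma cls_eqI: "mc B X PP u v \<Longrightarrow> cls u = cls v"
  using cls_eq_iff mc_words by blast

lemma cls_non_word: "u \<notin> Words \<Longrightarrow> cls u = {}"
  unfolding mclass_def using mc_words by blast

lemma mem_cls: "u \<in> Words \<Longrightarrow> u \<in> cls u"
  unfolding mclass_def using mc_refl by blast

lemma cls_eq_word: "cls u = cls v \<Longrightarrow> u \<in> Words \<Longrightarrow> v \<in> Words"
  using cls_eq_iff mc_words by blast

lemma cls_context: assumes "cls u = cls v" shows "cls (x @ u @ y) = cls (x @ v @ y)"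
proof (cases "x \<in> Words \<and> y \<in> Words \<and> u \<in> Words")
  case True
  thus ?thesis using assms cls_eq_iff mc_ctx cls_eqI by metis
next
  case False
  have uv: "u \<in> Words \<longleftrightarrow> v \<in> Words"
    using cls_eq_word[OF assms] cls_eq_word[OF assms[symmetric]] by blast
  have "x @ u @ y \<notin> Words" "x @ v @ y \<notin> Words" using False uv by auto
  thus ?thesis using cls_non_word by simp
qed

lemma cls_context_left: "cls u = cls v \<Longrightarrow> cls (x @ u) = cls (x @ v)"
  using cls_context[of u v x "[]"] by simp

lemma cls_context_right: "cls u = cls v \<Longrightarrow> cls (u @ y) = cls (v @ y)"
  using cls_context[of u v "[]" y] by simp

lemma cls_mul_iv_mul: "cls (w @ winv w @ w) = cls w"
  by (cases "w \<in> Words") (auto intro!: cls_eqI mc_ax1 simp: cls_non_word)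

lemma cls_mul_iv_commute: "cls (w @ winv w @ z @ winv z) = cls (z @ winv z @ w @ winv w)"
proof (cases "w \<in> Words \<and> z \<in> Words")
  case True thus ?thesis by (auto intro!: cls_eqI mc_ax2)
next
  case False
  hence "w @ winv w @ z @ winv z \<notin> Words" "z @ winv z @ w @ winv w \<notin> Words" by auto
  thus ?thesis by (simp add: cls_non_word)
qed

lemma cls_swap: "cls (x @ w @ winv w @ z @ winv z @ y) = cls (x @ z @ winv z @ w @ winv w @ y)"
  using cls_context[OF cls_mul_iv_commute, of x w z y] by (simp only: append_assoc)

lemma cls_idem_eq: assumes i: "cls (u @ u) = cls u"
  shows "cls u = cls (u @ winv u @ winv u @ u)"
proof -
  have "cls u = cls (u @ u)" using i by (rule sym)
  also have "\<dots> = cls ((u @ winv u @ u) @ u)"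
    using cls_context_right[OF cls_mul_iv_mul[of u, symmetric], of u] .
  also have "\<dots> = cls ((u @ winv u @ u) @ (u @ winv u @ u))"
    using cls_context_left[OF cls_mul_iv_mul[of u, symmetric], of "u @ winv u @ u"] .
  also have "\<dots> = cls (u @ (u @ winv u @ winv u @ u) @ u)"
    using cls_swap[of u "winv u" u u] by (simp only: append_assoc winv_winv)
  also have "\<dots> = cls ((u @ u) @ winv u @ winv u @ (u @ u))" by (simp only: append_assoc)
  also have "\<dots> = cls (u @ winv u @ winv u @ (u @ u))"
    using cls_context_right[OF i, where y="winv u @ winv u @ (u @ u)"] by (simp only: append_assoc)
  also have "\<dots> = cls (u @ winv u @ winv u @ u)"
    using cls_context_left[OF i, of "u @ winv u @ winv u"] by (simp only: append_assoc)
  finally show ?thesis .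
qed

lemma cls_idem_commute: assumes u: "cls (u @ u) = cls u" and v: "cls (v @ v) = cls v"
  shows "cls (u @ v) = cls (v @ u)"
proof -
  let ?p = "u @ winv u" and ?q = "winv u @ u" and ?r = "v @ winv v" and ?s = "winv v @ v"
  have "cls (u @ v) = cls ((?p @ ?q) @ v)"
    using cls_context_right[OF cls_idem_eq[OF u], where y=v] by (simp only: append_assoc)
  also have "\<dots> = cls ((?p @ ?q) @ (?r @ ?s))"
    using cls_context_left[OF cls_idem_eq[OF v], where x="?p @ ?q"] by (simp only: append_assoc)
  also have "\<dots> = cls (u @ winv u @ v @ winv v @ winv u @ u @ winv v @ v)"
    using cls_swap[of "u @ winv u" "winv u" v "winv v @ v"] by (simp only: append_assoc winv_winv)
  also have "\<dots> = cls (v @ winv v @ u @ winv u @ winv u @ u @ winv v @ v)"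
    using cls_swap[of "[]" u v "winv u @ u @ winv v @ v"] by (simp only: append_assoc append_Nil)
  also have "\<dots> = cls (v @ winv v @ u @ winv u @ winv v @ v @ winv u @ u)"
    using cls_swap[of "v @ winv v @ u @ winv u" "winv u" "winv v" "[]"]
      by (simp only: append_assoc winv_winv append_Nil2)
  also have "\<dots> = cls (v @ winv v @ winv v @ v @ u @ winv u @ winv u @ u)"
    using cls_swap[of "v @ winv v" u "winv v" "winv u @ u"] by (simp only: append_assoc winv_winv)
  also have "\<dots> = cls ((?r @ ?s) @ (?p @ ?q))" by (simp only: append_assoc)
  also have "\<dots> = cls (v @ (?p @ ?q))"
    using cls_context_right[OF cls_idem_eq[OF v, symmetric], where y="?p @ ?q"] by (simp only: append_assoc)
  also have "\<dots> = cls (v @ u)"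
    using cls_context_left[OF cls_idem_eq[OF u, symmetric], where x=v] by (simp only: append_assoc)
  finally show ?thesis .
qed

text \<open>Wagner's axioms make idempotents commute, so inverses are unique; this is what makes
  winv compatible with the congruence.\<close>

lemma cls_inverse_unique: assumes x: "cls (a @ x @ a) = cls a" "cls (x @ a @ x) = cls x"
  and y: "cls (a @ y @ a) = cls a" "cls (y @ a @ y) = cls y"
  shows "cls x = cls y"
proof -
  have ix: "cls ((x @ a) @ (x @ a)) = cls (x @ a)"
    using cls_context_right[OF x(2), where y=a] by (simp only: append_assoc)
  have iy: "cls ((y @ a) @ (y @ a)) = cls (y @ a)"
    using cls_context_right[OF y(2), where y=a] by (simp only: append_assoc)
  have jx: "cls ((a @ x) @ (a @ x)) = cls (a @ x)"
    using cls_context_left[OF x(2), where x=a] by (simp only: append_assoc)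
  have jy: "cls ((a @ y) @ (a @ y)) = cls (a @ y)"
    using cls_context_left[OF y(2), where x=a] by (simp only: append_assoc)
  have "cls x = cls (x @ a @ x)" using x(2) by (rule sym)
  also have "\<dots> = cls (x @ (a @ y @ a) @ x)"
    using cls_context[OF y(1)[symmetric], where x=x and y=x] .
  also have "\<dots> = cls ((x @ a) @ (y @ a) @ x)" by (simp only: append_assoc)
  also have "\<dots> = cls ((y @ a) @ (x @ a) @ x)"
    using cls_context_right[OF cls_idem_commute[OF ix iy], where y=x] by (simp only: append_assoc)
  also have "\<dots> = cls (y @ a @ (x @ a @ x))" by (simp only: append_assoc)
  also have "\<dots> = cls (y @ a @ x)"
    using cls_context_left[OF x(2), of "y @ a"] by (simp only: append_assoc)
  finally have 1: "cls x = cls (y @ a @ x)" .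
  have "cls y = cls (y @ a @ y)" using y(2) by (rule sym)
  also have "\<dots> = cls (y @ (a @ x @ a) @ y)"
    using cls_context[OF x(1)[symmetric], where x=y and y=y] .
  also have "\<dots> = cls (y @ (a @ x) @ (a @ y))" by (simp only: append_assoc)
  also have "\<dots> = cls (y @ (a @ y) @ (a @ x))"
    using cls_context_left[OF cls_idem_commute[OF jx jy], where x=y] by (simp only: append_assoc)
  also have "\<dots> = cls ((y @ a @ y) @ a @ x)" by (simp only: append_assoc)
  also have "\<dots> = cls (y @ a @ x)"
    using cls_context_right[OF y(2), of "a @ x"] by (simp only: append_assoc)
  finally show ?thesis using 1 by simp
qed

lemma mc_winv: assumes "mc B X PP u v" shows "mc B X PP (winv u) (winv v)"
proof -
  have words: "u \<in> Words" "v \<in> Words" using mc_words assms by auto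
  have uv: "cls u = cls v" using cls_eqI assms by simp
  have "cls (winv u) = cls (winv v)"
  proof (rule cls_inverse_unique[of v])
    have "cls (v @ winv u @ v) = cls (u @ winv u @ u)"
      using cls_context[OF uv[symmetric], of "[]" "winv u @ v"] cls_context_left[OF uv[symmetric], of "u @ winv u"]
      by (simp only: append_assoc append_Nil)
    thus "cls (v @ winv u @ v) = cls v" using cls_mul_iv_mul[of u] uv by simp
    have "cls (winv u @ v @ winv u) = cls (winv u @ u @ winv u)"
      using cls_context[OF uv[symmetric], of "winv u" "winv u"] .
    thus "cls (winv u @ v @ winv u) = cls (winv u)" using cls_mul_iv_mul[of "winv u"] by simp
    show "cls (v @ winv v @ v) = cls v" using cls_mul_iv_mul by simp
    show "cls (winv v @ v @ winv v) = cls (winv v)" using cls_mul_iv_mul[of "winv v"] by simp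
  qed
  thus ?thesis using cls_eq_iff words by simp
qed

lemma mmul_cls: "mmul B X PP (cls u) (cls v) = cls (u @ v)"
proof (cases "u \<in> Words \<and> v \<in> Words")
  case True
  show ?thesis
  proof (intro set_eqI iffI)
    fix w assume "w \<in> mmul B X PP (cls u) (cls v)"
    then obtain x y where h: "mc B X PP u x" "mc B X PP v y" "mc B X PP (x @ y) w"
      unfolding mmul_def mclass_def by auto
    have "cls (u @ v) = cls (x @ v)" using cls_context_right[OF cls_eqI[OF h(1)], where y=v] .
    also have "\<dots> = cls (x @ y)" using cls_context_left[OF cls_eqI[OF h(2)], where x=x] .
    also have "\<dots> = cls w" using cls_eqI h by simp
    finally show "w \<in> cls (u @ v)" using mem_cls mc_words h(3) by blast
  next
    fix w assume "w \<in> cls (u @ v)"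
    thus "w \<in> mmul B X PP (cls u) (cls v)" unfolding mmul_def
      using mem_cls True by (auto simp: mclass_def)
  qed
next
  case False
  hence "cls u = {} \<or> cls v = {}" using cls_non_word by auto
  thus ?thesis using False cls_non_word by (auto simp: mmul_def)
qed

lemma minv_cls: assumes "u \<in> Words" shows "minv B X PP (cls u) = cls (winv u)"
proof (intro set_eqI iffI)
  fix w assume "w \<in> minv B X PP (cls u)"
  then obtain x where "mc B X PP u x" "mc B X PP (winv x) w" unfolding minv_def mclass_def by auto
  thus "w \<in> cls (winv u)" unfolding mclass_def using mc_winv mc_trans by blast
next
  fix w assume "w \<in> cls (winv u)"
  thus "w \<in> minv B X PP (cls u)" unfolding minv_def mclass_def using mc_refl[OF assms] by auto
qed

lemma Mset_iff: "a \<in> Mset B X PP \<longleftrightarrow> (\<exists>u\<in>Words. a = cls u)"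
  by (auto simp: Mset_def)

sublocale im: inverse_monoid "Mset B X PP" "mmul B X PP" "minv B X PP" "cls []"
proof
  fix x y z assume "x \<in> Mset B X PP" "y \<in> Mset B X PP" "z \<in> Mset B X PP"
  then obtain u v w where u: "u \<in> Words" "x = cls u" and v: "v \<in> Words" "y = cls v" and w: "w \<in> Words" "z = cls w"
    by (auto simp: Mset_iff)
  show "mmul B X PP x y \<in> Mset B X PP" using u v mmul_cls unfolding Mset_iff
    by (metis append_in_lists_conv)
  show "minv B X PP x \<in> Mset B X PP" using u minv_cls unfolding Mset_iff
    by (metis winv_in_words)
  show "mmul B X PP (mmul B X PP x y) z = mmul B X PP x (mmul B X PP y z)"
    using u v w mmul_cls by simp
  show "mmul B X PP (cls []) x = x" using u mmul_cls by simp
  show "mmul B X PP x (cls []) = x" using u mmul_cls by simp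
  show "minv B X PP (minv B X PP x) = x" using u minv_cls by simp
  show "minv B X PP (mmul B X PP x y) = mmul B X PP (minv B X PP y) (minv B X PP x)"
    using u v minv_cls mmul_cls by simp
  show "mmul B X PP x (mmul B X PP (minv B X PP x) x) = x"
    using u minv_cls mmul_cls cls_mul_iv_mul by simp
  show "mmul B X PP x (mmul B X PP (minv B X PP x) (mmul B X PP y (minv B X PP y))) =
        mmul B X PP y (mmul B X PP (minv B X PP y) (mmul B X PP x (minv B X PP x)))"
    using u v minv_cls mmul_cls cls_mul_iv_commute by simp
next
  show "cls [] \<in> Mset B X PP" by (auto simp: Mset_iff)
qed

lemma cls_eq_prod: "w \<in> Words \<Longrightarrow> cls w = im.prod (map (\<lambda>a. cls [a]) w)"
proof (induction w)
  case (Cons a w)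
  then show ?case using mmul_cls[of "[a]" w] by simp
qed simp

lemma le_eq: "im.le = mleq B X PP"
  by (intro ext) (simp add: im.le_def mleq_def)

lemma up_eq: "im.up = omega B X PP"
  by (intro ext) (simp add: im.up_def omega_def le_eq)

lemma rcoset_eq: "im.rcoset = rmul B X PP"
  by (intro ext) (simp add: im.rcoset_def rmul_def)

lemma closed_submonoid_eq: "im.closed_submonoid = closed_inv_submonoid B X PP"
  by (intro ext) (simp add: im.closed_submonoid_def closed_inv_submonoid_def up_eq)

end

section \<open>Delta-complexes, immersions and attaching a cell\<close>

lemma dcx_face_cell: "is_dcx K \<Longrightarrow> c \<in> cells K \<Longrightarrow> i \<le> cdim K c \<Longrightarrow> 0 < cdim K c \<Longrightarrow>
   face K c i \<in> cells K \<and> cdim K (face K c i) = cdim K c - 1"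
  unfolding is_dcx_def by blast

lemma dcx_face_face: "is_dcx K \<Longrightarrow> c \<in> cells K \<Longrightarrow> i < j \<Longrightarrow> j \<le> cdim K c \<Longrightarrow> 2 \<le> cdim K c \<Longrightarrow>
   face K (face K c j) i = face K (face K c i) (j - 1)"
  unfolding is_dcx_def by blast

lemma rootf_vertex: "is_dcx K \<Longrightarrow> c \<in> cells K \<Longrightarrow> cdim K c = n \<Longrightarrow>
   rootf K n c \<in> cells K \<and> cdim K (rootf K n c) = 0"
proof (induct n arbitrary: c)
  case 0 thus ?case by simp
next
  case (Suc n)
  have "face K c (Suc n) \<in> cells K \<and> cdim K (face K c (Suc n)) = n"
    using dcx_face_cell[OF Suc(2,3)] Suc(4) by simp
  thus ?case using Suc by simp
qed

lemma root_in_verts: "is_dcx K \<Longrightarrow> c \<in> cells K \<Longrightarrow> root K c \<in> verts K"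
  using rootf_vertex[of K c "cdim K c"] by (simp add: root_def verts_def)

lemma rootf_face: "is_dcx K \<Longrightarrow> c \<in> cells K \<Longrightarrow> cdim K c = Suc n \<Longrightarrow> 1 \<le> i \<Longrightarrow> i \<le> Suc n \<Longrightarrow>
   rootf K n (face K c i) = rootf K n (face K c (Suc n))"
proof (induct n arbitrary: c i)
  case 0 thus ?case by (cases i) auto
next
  case (Suc n)
  show ?case
  proof (cases "i = Suc (Suc n)")
    case True thus ?thesis by simp
  next
    case False
    hence i: "i \<le> Suc n" using Suc by simp
    let ?c' = "face K c (Suc (Suc n))"
    have c': "?c' \<in> cells K" "cdim K ?c' = Suc n" using dcx_face_cell[OF Suc(2,3)] Suc(4) by auto
    have F: "face K ?c' i = face K (face K c i) (Suc n)"
      using dcx_face_face[OF Suc(2,3), of i "Suc (Suc n)"] i Suc(4) by simp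
    have "rootf K (Suc n) (face K c i) = rootf K n (face K ?c' i)" using F by simp
    also have "\<dots> = rootf K n (face K ?c' (Suc n))" by (rule Suc(1)[OF Suc(2) c'(1) c'(2) Suc(5) i])
    also have "\<dots> = rootf K (Suc n) ?c'" by simp
    finally show ?thesis .
  qed
qed

lemma root_face: assumes "is_dcx K" "c \<in> cells K" "cdim K c = Suc n" "1 \<le> i" "i \<le> Suc n"
  shows "root K (face K c i) = root K c"
proof -
  have "cdim K (face K c i) = n" using dcx_face_cell[OF assms(1,2)] assms by simp
  thus ?thesis using rootf_face[OF assms] assms(3) by (simp add: root_def)
qed

lemma rootf_face0: "is_dcx K \<Longrightarrow> c \<in> cells K \<Longrightarrow> cdim K c = Suc n \<Longrightarrow>
   rootf K n (face K c 0) = face K (e01f K (Suc n) c) 0"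
proof (induct n arbitrary: c)
  case 0 thus ?case by simp
next
  case (Suc n)
  let ?c' = "face K c (Suc (Suc n))"
  have c': "?c' \<in> cells K" "cdim K ?c' = Suc n" using dcx_face_cell[OF Suc(2,3)] Suc(4) by auto
  have F: "face K ?c' 0 = face K (face K c 0) (Suc n)"
    using dcx_face_face[OF Suc(2,3), of 0 "Suc (Suc n)"] Suc(4) by simp
  have "rootf K (Suc n) (face K c 0) = rootf K n (face K ?c' 0)" using F by simp
  also have "\<dots> = face K (e01f K (Suc n) ?c') 0" using Suc(1)[OF Suc(2) c'] .
  finally show ?case by simp
qed

lemma root_face0: assumes "is_dcx K" "c \<in> cells K" "cdim K c = Suc n"
  shows "root K (face K c 0) = face K (e01 K c) 0"
proof -
  have "cdim K (face K c 0) = n" using dcx_face_cell[OF assms(1,2)] assms by simp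
  thus ?thesis using rootf_face0[OF assms] assms(3) by (simp add: root_def e01_def)
qed

lemma e01f_cell: "is_dcx K \<Longrightarrow> c \<in> cells K \<Longrightarrow> cdim K c = Suc n \<Longrightarrow>
   e01f K (Suc n) c \<in> cells K \<and> cdim K (e01f K (Suc n) c) = 1
   \<and> rootf K 1 (e01f K (Suc n) c) = rootf K (Suc n) c"
proof (induct n arbitrary: c)
  case 0 thus ?case by simp
next
  case (Suc n)
  let ?c' = "face K c (Suc (Suc n))"
  have c': "?c' \<in> cells K" "cdim K ?c' = Suc n" using dcx_face_cell[OF Suc(2,3)] Suc(4) by auto
  show ?case using Suc(1)[OF Suc(2) c'] by simp
qed

lemma e01_cell: assumes "is_dcx K" "c \<in> cells K" "cdim K c = Suc n"
  shows "e01 K c \<in> cells K" "cdim K (e01 K c) = 1" "root K (e01 K c) = root K c"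
  using e01f_cell[OF assms] assms(3) by (auto simp: e01_def root_def simp del: rootf.simps)

lemma e01f_face: "is_dcx K \<Longrightarrow> c \<in> cells K \<Longrightarrow> cdim K c = Suc (Suc n) \<Longrightarrow> 2 \<le> j \<Longrightarrow> j \<le> Suc (Suc n) \<Longrightarrow>
   e01f K (Suc n) (face K c j) = e01f K (Suc n) (face K c (Suc (Suc n)))"
proof (induct n arbitrary: c j)
  case 0
  hence "j = Suc (Suc 0)" by simp
  thus ?case by simp
next
  case (Suc n)
  show ?case
  proof (cases "j = Suc (Suc (Suc n))")
    case True thus ?thesis by simp
  next
    case False
    hence j: "j \<le> Suc (Suc n)" using Suc by simp
    let ?c' = "face K c (Suc (Suc (Suc n)))"
    have c': "?c' \<in> cells K" "cdim K ?c' = Suc (Suc n)"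
      using dcx_face_cell[OF Suc(2,3)] Suc(4) by auto
    have F: "face K ?c' j = face K (face K c j) (Suc (Suc n))"
      using dcx_face_face[OF Suc(2,3), of j "Suc (Suc (Suc n))"] j Suc(4) by simp
    have "e01f K (Suc (Suc n)) (face K c j) = e01f K (Suc n) (face K ?c' j)" using F by simp
    also have "\<dots> = e01f K (Suc n) (face K ?c' (Suc (Suc n)))"
      by (rule Suc(1)[OF Suc(2) c'(1) c'(2) Suc(5) j])
    also have "\<dots> = e01f K (Suc (Suc n)) ?c'" by simp
    finally show ?thesis .
  qed
qed

lemma e01_face: assumes "is_dcx K" "c \<in> cells K" "cdim K c = Suc (Suc n)" "2 \<le> j" "j \<le> Suc (Suc n)"
  shows "e01 K (face K c j) = e01 K c"
proof -
  have "cdim K (face K c j) = Suc n" using dcx_face_cell[OF assms(1,2)] assms by simp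
  thus ?thesis using e01f_face[OF assms] assms(3) by (simp add: e01_def)
qed

lemma vtxf_0: "vtxf K n c 0 = rootf K n c"
  by (induct n arbitrary: c) auto

lemma vert_0_eq_root: "vert K c 0 = root K c"
  by (simp add: vert_def root_def vtxf_0)

lemma vert_Suc_face0:
  "cdim K c = Suc n \<Longrightarrow> cdim K (face K c 0) = n \<Longrightarrow> vert K c (Suc n) = vert K (face K c 0) n"
  by (simp add: vert_def)

lemma root_edge: "cdim K c = 1 \<Longrightarrow> root K c = face K c 1"
  by (simp add: root_def)

lemma imm_cell: "is_imm D C f \<Longrightarrow> c \<in> cells D \<Longrightarrow> f c \<in> cells C \<and> cdim C (f c) = cdim D c"
  unfolding is_imm_def by blast

lemma imm_face: "is_imm D C f \<Longrightarrow> c \<in> cells D \<Longrightarrow> i \<le> cdim D c \<Longrightarrow> 0 < cdim D c \<Longrightarrow>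
   f (face D c i) = face C (f c) i"
  unfolding is_imm_def by blast

lemma imm_inj: "is_imm D C f \<Longrightarrow> c \<in> cells D \<Longrightarrow> c' \<in> cells D \<Longrightarrow> cdim D c = cdim D c' \<Longrightarrow>
   f c = f c' \<Longrightarrow> i \<le> cdim D c \<Longrightarrow> vert D c i = vert D c' i \<Longrightarrow> c = c'"
  unfolding is_imm_def by blast

lemma imm_rootf: "is_imm D C f \<Longrightarrow> is_dcx D \<Longrightarrow> c \<in> cells D \<Longrightarrow> cdim D c = n \<Longrightarrow>
   f (rootf D n c) = rootf C n (f c)"
proof (induct n arbitrary: c)
  case 0 thus ?case by simp
next
  case (Suc n)
  have "face D c (Suc n) \<in> cells D \<and> cdim D (face D c (Suc n)) = n"
    using dcx_face_cell[OF Suc(3,4)] Suc(5) by simp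
  thus ?case using Suc imm_face[OF Suc(2,4)] by simp
qed

lemma imm_root: "is_imm D C f \<Longrightarrow> is_dcx D \<Longrightarrow> c \<in> cells D \<Longrightarrow> f (root D c) = root C (f c)"
  using imm_rootf imm_cell by (metis root_def)

lemma imm_e01f: "is_imm D C f \<Longrightarrow> is_dcx D \<Longrightarrow> c \<in> cells D \<Longrightarrow> cdim D c = Suc n \<Longrightarrow>
   f (e01f D (Suc n) c) = e01f C (Suc n) (f c)"
proof (induct n arbitrary: c)
  case 0 thus ?case by simp
next
  case (Suc n)
  have "face D c (Suc (Suc n)) \<in> cells D \<and> cdim D (face D c (Suc (Suc n))) = Suc n"
    using dcx_face_cell[OF Suc(3,4)] Suc(5) by simp
  thus ?case using Suc imm_face[OF Suc(2,4)] by simp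
qed

lemma imm_e01: "is_imm D C f \<Longrightarrow> is_dcx D \<Longrightarrow> c \<in> cells D \<Longrightarrow> cdim D c = Suc n \<Longrightarrow>
   f (e01 D c) = e01 C (f c)"
  using imm_e01f imm_cell by (metis e01_def)

lemma rootf_attach: "rootf (attach E k d) n (Some c) = Some (rootf E n c)"
  by (induct n arbitrary: c) (auto simp: attach_def)

lemma attach_cells: "cells (attach E k d) = Some ` cells E \<union> {None}"
  and attach_cdim: "cdim (attach E k d) (Some c) = cdim E c" "cdim (attach E k d) None = k"
  and attach_face: "face (attach E k d) (Some c) i = Some (face E c i)"
    "face (attach E k d) None i = Some (d i)"
  by (simp_all add: attach_def)

lemma adj_attach: assumes k: "2 \<le> k" shows "adj (attach E k d) = map_prod Some Some ` adj E"
proof (intro set_eqI iffI)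
  fix p assume "p \<in> adj (attach E k d)"
  then obtain e where e: "p = (face (attach E k d) e 1, face (attach E k d) e 0)" "e \<in> cells (attach E k d)"
     "cdim (attach E k d) e = 1" unfolding adj_def by blast
  then obtain e' where e': "e = Some e'" "e' \<in> cells E"
    using k by (cases e) (auto simp: attach_cells attach_cdim)
  have "(face E e' 1, face E e' 0) \<in> adj E" using e e' unfolding adj_def by (auto simp: attach_cdim)
  thus "p \<in> map_prod Some Some ` adj E" using e e' by (force simp: attach_face)
next
  fix p assume "p \<in> map_prod Some Some ` adj E"
  then obtain e where "p = (Some (face E e 1), Some (face E e 0))" "e \<in> cells E" "cdim E e = 1"
    unfolding adj_def by auto
  thus "p \<in> adj (attach E k d)" unfolding adj_def
    by (intro CollectI exI[of _ "Some e"]) (simp add: attach_cells attach_cdim attach_face)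
qed

lemma verts_attach: assumes k: "2 \<le> k" shows "verts (attach E k d) = Some ` verts E"
proof (intro set_eqI iffI)
  fix x assume "x \<in> verts (attach E k d)"
  thus "x \<in> Some ` verts E" using k by (cases x) (auto simp: verts_def attach_cells attach_cdim)
next
  fix x assume "x \<in> Some ` verts E"
  thus "x \<in> verts (attach E k d)" by (auto simp: verts_def attach_cells attach_cdim)
qed

lemma rtrancl_map_prod_image: "(x, y) \<in> R\<^sup>* \<Longrightarrow> (f x, f y) \<in> (map_prod f f ` R)\<^sup>*"
proof (induction rule: rtrancl_induct)
  case (step y z)
  then have "(f y, f z) \<in> map_prod f f ` R" by force
  with step.IH show ?case by (rule rtrancl.rtrancl_into_rtrancl)
qed simp

lemma is_dcx_attach: assumes E: "is_dcx E" and k: "2 \<le> k"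
  and d_cells: "\<forall>i\<le>k. d i \<in> cells E \<and> cdim E (d i) = k - 1"
  and d_compatible: "\<forall>i j. i < j \<and> j \<le> k \<longrightarrow> face E (d j) i = face E (d i) (j - 1)"
  shows "is_dcx (attach E k d)"
proof -
  let ?K = "attach E k d"
  have faces: "\<forall>c\<in>cells ?K. \<forall>i\<le>cdim ?K c. 0 < cdim ?K c \<longrightarrow>
          face ?K c i \<in> cells ?K \<and> cdim ?K (face ?K c i) = cdim ?K c - 1"
    using E d_cells unfolding is_dcx_def attach_def by auto
  have face_face: "\<forall>c\<in>cells ?K. \<forall>i j. i < j \<and> j \<le> cdim ?K c \<and> 2 \<le> cdim ?K c \<longrightarrow>
          face ?K (face ?K c j) i = face ?K (face ?K c i) (j - 1)"
    using E d_compatible unfolding is_dcx_def attach_def by auto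
  obtain N where N: "\<forall>c\<in>cells E. cdim E c \<le> N" using E unfolding is_dcx_def by blast
  have bounded: "\<exists>N. \<forall>c\<in>cells ?K. cdim ?K c \<le> N"
    by (rule exI[of _ "max N k"]) (use N in \<open>auto simp: attach_def\<close>)
  have nonempty: "verts ?K \<noteq> {}"
  proof -
    have "verts E \<noteq> {}" using E unfolding is_dcx_def by blast
    thus ?thesis using verts_attach[OF k, of E d] by simp
  qed
  have connected: "\<forall>x\<in>verts ?K. \<forall>y\<in>verts ?K. (x, y) \<in> (adj ?K \<union> (adj ?K)\<inverse>)\<^sup>*"
  proof (intro ballI)
    fix x y assume "x \<in> verts ?K" "y \<in> verts ?K"
    then obtain x' y' where xy: "x = Some x'" "y = Some y'" "x' \<in> verts E" "y' \<in> verts E"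
      using verts_attach[OF k, of E d] by auto
    have "(x', y') \<in> (adj E \<union> (adj E)\<inverse>)\<^sup>*" using E xy unfolding is_dcx_def by blast
    hence "(x, y) \<in> (map_prod Some Some ` (adj E \<union> (adj E)\<inverse>))\<^sup>*"
      unfolding xy(1,2) by (rule rtrancl_map_prod_image)
    moreover have "map_prod Some Some ` (adj E \<union> (adj E)\<inverse>) = adj ?K \<union> (adj ?K)\<inverse>"
      using adj_attach[OF k, of E d] by auto
    ultimately show "(x, y) \<in> (adj ?K \<union> (adj ?K)\<inverse>)\<^sup>*" by simp
  qed
  show ?thesis unfolding is_dcx_def using faces face_face bounded nonempty connected by blast
qed

lemma root_attach: assumes "1 \<le> k" "root E (d k) = u" "cdim E (d k) = k - 1"
  shows "root (attach E k d) None = Some u"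
proof -
  obtain k' where k: "k = Suc k'" using assms by (cases k) auto
  have "root (attach E k d) None = rootf (attach E k d) k' (Some (d k))"
    by (simp add: root_def attach_def k)
  also have "\<dots> = Some (rootf E k' (d k))" by (rule rootf_attach)
  finally show ?thesis using assms k by (simp add: root_def)
qed


lemma edge_face_in_verts: "is_dcx K \<Longrightarrow> c \<in> cells K \<Longrightarrow> cdim K c = 1 \<Longrightarrow> i \<le> 1 \<Longrightarrow> face K c i \<in> verts K"
  using dcx_face_cell[of K c i] by (simp add: verts_def)

lemma imm_eq_if_root_eq:
  "is_imm D C f \<Longrightarrow> c \<in> cells D \<Longrightarrow> c' \<in> cells D \<Longrightarrow> cdim D c = cdim D c' \<Longrightarrow> f c = f c' \<Longrightarrow>
   root D c = root D c' \<Longrightarrow> c = c'"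
  using imm_inj[of D C f c c' 0] by (simp add: vert_0_eq_root)

lemma imm_eq_if_face0_eq:
  assumes "is_imm D C f" "is_dcx D" "c \<in> cells D" "c' \<in> cells D" "cdim D c = Suc p" "cdim D c' = Suc p"
    "f c = f c'" "face D c 0 = face D c' 0"
  shows "c = c'"
proof -
  have "cdim D (face D c 0) = p" "cdim D (face D c' 0) = p"
    using dcx_face_cell[OF assms(2,3), of 0] dcx_face_cell[OF assms(2,4), of 0] assms(5,6) by auto
  then have "vert D c (Suc p) = vert D c' (Suc p)" using vert_Suc_face0 assms by metis
  then show ?thesis using imm_inj[OF assms(1,3,4), of "Suc p"] assms by simp
qed

locale B_complex =
  fixes B :: "'l dcx" and X :: "'l set" and P :: "nat \<Rightarrow> 'l set" and n :: nat and b0 :: 'l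
  assumes B: "is_B B X P n b0"
begin

abbreviation "PP \<equiv> Pall P n"

lemma B_dcx: "is_dcx B"
  using B by (simp add: is_B_def)

lemma cells_B: "cells B = {b0} \<union> X \<union> PP" and cdim_b0: "cdim B b0 = 0"
  and cdim_X: "x \<in> X \<Longrightarrow> cdim B x = 1"
  and cdim_P: "j \<in> {2..n} \<Longrightarrow> x \<in> P j \<Longrightarrow> cdim B x = j"
  using B by (auto simp: is_B_def)

lemma mem_PP_iff: "x \<in> PP \<longleftrightarrow> (\<exists>j\<in>{2..n}. x \<in> P j)"
  by (simp add: Pall_def)

lemma B_edge_in_X: "c \<in> cells B \<Longrightarrow> cdim B c = 1 \<Longrightarrow> c \<in> X"
  using cells_B cdim_b0 cdim_P mem_PP_iff by fastforce

lemma B_cell_in_P: assumes "c \<in> cells B" "cdim B c = j" "2 \<le> j" shows "c \<in> P j" "j \<le> n"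
proof -
  have "c \<noteq> b0" "c \<notin> X" using assms cdim_b0 cdim_X by auto
  then obtain j' where "j' \<in> {2..n}" "c \<in> P j'" using assms cells_B mem_PP_iff by auto
  then show "c \<in> P j" "j \<le> n" using assms cdim_P by force+
qed

lemma B_cell_in_X_PP: "c \<in> cells B \<Longrightarrow> 1 \<le> cdim B c \<Longrightarrow> c \<in> X \<union> PP"
  using cells_B cdim_b0 by fastforce

lemma bl_in_words: assumes "r \<in> PP" shows "set (bl B r) \<subseteq> alph X PP"
proof -
  obtain j where j: "j \<in> {2..n}" "r \<in> P j" using assms mem_PP_iff by auto
  have r: "r \<in> cells B" "cdim B r = Suc (j - 1)" using j cdim_P cells_B assms by auto
  have face: "\<forall>i\<le>j. face B r i \<in> X \<union> PP"
  proof (intro allI impI B_cell_in_X_PP)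
    show "face B r i \<in> cells B" "1 \<le> cdim B (face B r i)" if "i \<le> j" for i
      using dcx_face_cell[OF B_dcx r(1), of i] r j that by auto
  qed
  have "(e01 B r, b) \<in> alph X PP" for b
    using e01_cell[OF B_dcx r] B_edge_in_X by (simp add: alph_def)
  moreover have "set (map (\<lambda>i. (face B r i, True)) (rev [1..<j + 1])) \<subseteq> alph X PP"
  proof
    fix p assume "p \<in> set (map (\<lambda>i. (face B r i, True)) (rev [1..<j + 1]))"
    then obtain i where i: "i \<in> set [1..<j + 1]" "p = (face B r i, True)" by auto
    then have "i \<le> j" by auto
    then show "p \<in> alph X PP" using face i(2) by (auto simp: alph_def)
  qed
  moreover have "(face B r i, b) \<in> alph X PP" if "i \<le> 2" for i b
    using face j that by (auto simp: alph_def)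
  moreover have "cdim B r = j" using j cdim_P assms by auto
  ultimately show ?thesis by (simp add: bl_def Let_def)
qed

sublocale presentation B X PP
  by unfold_locales (use bl_in_words in auto)

abbreviation "Mon \<equiv> Mset B X PP"
abbreviation mul (infixl "\<cdot>" 70) where "mul \<equiv> mmul B X PP"
abbreviation "iv \<equiv> minv B X PP"
abbreviation "letter a \<equiv> cls [(a, True)]"

lemma letter_closed: "a \<in> X \<union> PP \<Longrightarrow> cls [(a, b)] \<in> Mon"
  using Mset_iff by (auto simp: alph_def)

lemma letter_False: "a \<in> X \<union> PP \<Longrightarrow> cls [(a, False)] = iv (letter a)"
  using minv_cls[of "[(a, True)]"] by (auto simp: alph_def)

lemma letter_idem: "a \<in> PP \<Longrightarrow> im.idem (letter a)"
  unfolding im.idem_def using letter_closed mmul_cls cls_eqI[OF mc_idem, of a] by simp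

lemma letter_bl: "a \<in> PP \<Longrightarrow> letter a \<cdot> cls (bl B a) = letter a"
  using cls_eqI[OF mc_bl, of a] mmul_cls[of "[(a, True)]" "bl B a"] by simp

lemma cls_letters:
  assumes "set ws \<subseteq> X \<union> PP" shows "cls (map (\<lambda>a. (a, True)) ws) = im.prod (map letter ws)"
proof -
  have "map (\<lambda>a. (a, True)) ws \<in> Words" using assms by (auto simp: alph_def)
  from cls_eq_prod[OF this] show ?thesis by (simp add: comp_def)
qed

lemma idem_letters: assumes "set ws \<subseteq> PP" shows "im.idem (cls (map (\<lambda>a. (a, True)) ws))"
proof -
  have "im.idem (im.prod (map letter ws))" by (rule im.idem_prod) (use letter_idem assms in auto)
  moreover have "cls (map (\<lambda>a. (a, True)) ws) = im.prod (map letter ws)"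
    using assms by (intro cls_letters) auto
  ultimately show ?thesis by simp
qed

lemma letters_absorb:
  assumes "set ws \<subseteq> PP" "a \<in> set ws"
  shows "cls (map (\<lambda>a. (a, True)) ws) \<cdot> letter a = cls (map (\<lambda>a. (a, True)) ws)"
proof -
  have "im.prod (map letter ws) \<cdot> letter a = im.prod (map letter ws)"
    by (rule im.prod_absorb) (use letter_idem assms in auto)
  moreover have "cls (map (\<lambda>a. (a, True)) ws) = im.prod (map letter ws)"
    using assms by (intro cls_letters) auto
  ultimately show ?thesis by simp
qed

end

section \<open>Lifting the attaching map\<close>

locale lift_setting = B_complex B X P n b0
  for B :: "'l dcx" and X :: "'l set" and P :: "nat \<Rightarrow> 'l set" and n :: nat and b0 :: 'l +
  fixes C :: "'c dcx" and ellC :: "'c \<Rightarrow> 'l"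
    and E :: "'e dcx" and ellE :: "'e \<Rightarrow> 'l" and fS :: "'e \<Rightarrow> 'c"
    and H :: "'l mel set" and \<iota> :: "'e \<Rightarrow> 'l mel set"
    and S :: "('l mel set \<times> ('l \<times> bool) \<times> 'l mel set) set"
    and k :: nat and u :: 'e and \<rho> :: 'l and Ck :: 'c
  assumes C: "is_labeled C B ellC"
    and H: "closed_inv_submonoid B X (Pall P n) H"
    and k: "2 \<le> k" "k \<le> n"
    and E: "is_labeled E B ellE"
    and fS: "is_imm E C fS" "\<forall>c\<in>cells E. ellC (fS c) = ellE c"
    and vert_bij: "bij_betw \<iota> (verts E) {R. is_coset B X (Pall P n) H R}"
    and S_sub: "S \<subseteq> GH_edges B X (Pall P n) H"
    and edge_bij: "bij_betw (GE_edge E ellE \<iota>) (GE_idx E) S"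
    and S_low: "\<forall>(R1, a, R2) \<in> GH_edges B X (Pall P n) H.
                  fst a \<in> X \<union> (\<Union>j\<in>{2..<k}. P j) \<longrightarrow> (R1, a, R2) \<in> S"
    and u: "u \<in> verts E"
    and loop: "(\<iota> u, (\<rho>, True), \<iota> u) \<in> GH_edges B X (Pall P n) H"
    and rho: "\<rho> \<in> P k"
    and Ck: "Ck \<in> cells C" "cdim C Ck = k" "ellC Ck = \<rho>" "root C Ck = fS u"
begin

lemma C_dcx: "is_dcx C" and C_imm: "is_imm C B ellC"
  using C by (simp_all add: is_labeled_def)

lemma E_dcx: "is_dcx E" and E_imm: "is_imm E B ellE"
  using E by (simp_all add: is_labeled_def)

lemma cdim_ellE: "c \<in> cells E \<Longrightarrow> cdim B (ellE c) = cdim E c"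
  using imm_cell[OF E_imm] by simp

lemma rho_cell: "\<rho> \<in> cells B" "cdim B \<rho> = k" "\<rho> \<in> PP"
  using rho k cdim_P cells_B mem_PP_iff by auto

lemma face_rho_cell: "i \<le> k \<Longrightarrow> face B \<rho> i \<in> cells B \<and> cdim B (face B \<rho> i) = k - 1"
  using dcx_face_cell[OF B_dcx rho_cell(1)] rho_cell k by simp

abbreviation "wcoset m \<equiv> omega B X PP (rmul B X PP H m)"

lemma wcoset_eq: "wcoset m = im.up (im.rcoset H m)"
  by (simp add: up_eq rcoset_eq)

lemma H_closed: "im.closed_submonoid H"
  using H closed_submonoid_eq by simp

lemma wcoset_mul:
  "m1 \<in> Mon \<Longrightarrow> m2 \<in> Mon \<Longrightarrow> a \<in> Mon \<Longrightarrow> wcoset m1 = wcoset m2 \<Longrightarrow> wcoset (m1 \<cdot> a) = wcoset (m2 \<cdot> a)"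
  unfolding wcoset_eq by (rule im.up_rcoset_mul[OF H_closed])

lemma iota_inj: "x \<in> verts E \<Longrightarrow> y \<in> verts E \<Longrightarrow> \<iota> x = \<iota> y \<Longrightarrow> x = y"
  using vert_bij unfolding bij_betw_def inj_on_def by blast

lemma vertex_rep_mul_iv_mem:
  assumes "m \<in> Mon" "x \<in> verts E" "\<iota> x = wcoset m" shows "m \<cdot> iv m \<in> H"
proof -
  obtain q where q: "q \<in> Mon" "q \<cdot> iv q \<in> H" "\<iota> x = wcoset q"
    using vert_bij assms(2) unfolding bij_betw_def is_coset_def by blast
  then have "im.up (im.rcoset H m) = im.up (im.rcoset H q)" using assms unfolding wcoset_eq by simp
  then show ?thesis using im.up_rcoset_eq_mul_iv_mem[OF H_closed assms(1) q(1,2)] by simp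
qed

lemma GH_edgeI:
  assumes "a \<in> X \<union> PP" "m \<in> Mon" "m \<cdot> iv m \<in> H" "m \<cdot> letter a \<in> Mon"
    "(m \<cdot> letter a) \<cdot> iv (m \<cdot> letter a) \<in> H"
  shows "(wcoset m, (a, True), wcoset (m \<cdot> letter a)) \<in> GH_edges B X PP H"
  unfolding GH_edges_def is_coset_def using assms by blast

lemma S_cell:
  assumes "(\<iota> x, (l, True), R) \<in> S"
  obtains c b where "c \<in> cells E" "(c, b) \<in> GE_idx E" "GE_edge E ellE \<iota> (c, b) = (\<iota> x, (l, True), R)"
  using assms edge_bij unfolding bij_betw_def GE_idx_def by force

lemma lower_loop_cell:
  assumes x: "x \<in> verts E" and m: "m \<in> Mon" "m \<cdot> iv m \<in> H" "\<iota> x = wcoset m"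
    and l: "l \<in> P j" "2 \<le> j" "j < k" and fixed: "wcoset (m \<cdot> letter l) = \<iota> x"
  obtains c where "c \<in> cells E" "cdim E c = j" "root E c = x" "ellE c = l"
proof -
  have lP: "l \<in> PP" using l k mem_PP_iff by auto
  have ml: "m \<cdot> letter l \<in> Mon" using m lP letter_closed by simp
  have "(m \<cdot> letter l) \<cdot> iv (m \<cdot> letter l) \<in> H" using vertex_rep_mul_iv_mem[OF ml x] fixed by simp
  then have "(wcoset m, (l, True), wcoset (m \<cdot> letter l)) \<in> GH_edges B X PP H"
    by (intro GH_edgeI) (use lP m ml in auto)
  then have "(\<iota> x, (l, True), \<iota> x) \<in> GH_edges B X PP H" using m(3) fixed by simp
  then have "(\<iota> x, (l, True), \<iota> x) \<in> S" using S_low l by fastforce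
  then obtain c b where c: "c \<in> cells E" "(c, b) \<in> GE_idx E"
      and cb: "GE_edge E ellE \<iota> (c, b) = (\<iota> x, (l, True), \<iota> x)"
    by (rule S_cell)
  have "cdim B l = j" using cdim_P l k by auto
  then have dim: "cdim E c = j"
    using cdim_ellE[OF c(1)] cb by (auto simp: GE_edge_def split: if_splits)
  then have "\<iota> (root E c) = \<iota> x" "ellE c = l" using cb l by (auto simp: GE_edge_def)
  then show ?thesis using that c dim iota_inj[OF root_in_verts[OF E_dcx c(1)] x] by blast
qed

lemma lower_edge_cell:
  assumes x: "x \<in> verts E" and m: "m \<in> Mon" "m \<cdot> iv m \<in> H" "\<iota> x = wcoset m"
    and l: "l \<in> X" and rep: "(m \<cdot> letter l) \<cdot> iv (m \<cdot> letter l) \<in> H"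
  obtains c where "c \<in> cells E" "cdim E c = 1" "face E c 1 = x" "ellE c = l"
    "\<iota> (face E c 0) = wcoset (m \<cdot> letter l)"
proof -
  have "(\<iota> x, (l, True), wcoset (m \<cdot> letter l)) \<in> GH_edges B X PP H"
    using GH_edgeI[of l m] m l rep letter_closed by simp
  then have "(\<iota> x, (l, True), wcoset (m \<cdot> letter l)) \<in> S" using S_low l by fastforce
  then obtain c b where c: "c \<in> cells E" "(c, b) \<in> GE_idx E"
      and cb: "GE_edge E ellE \<iota> (c, b) = (\<iota> x, (l, True), wcoset (m \<cdot> letter l))"
    by (rule S_cell)
  have dim: "cdim E c = 1" using cdim_ellE[OF c(1)] cdim_X l cb
    by (auto simp: GE_edge_def split: if_splits)
  then have "\<iota> (face E c 1) = \<iota> x" "ellE c = l" "\<iota> (face E c 0) = wcoset (m \<cdot> letter l)"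
    using cb by (auto simp: GE_edge_def split: if_splits)
  moreover have "face E c 1 = x"
    using iota_inj[OF edge_face_in_verts[OF E_dcx c(1) dim] x] calculation by simp
  ultimately show ?thesis using that c dim by blast
qed

lemma edge_cell_GH_edge:
  assumes "c \<in> cells E" "cdim E c = 1"
  obtains m where "m \<in> Mon" "\<iota> (face E c 1) = wcoset m" "\<iota> (face E c 0) = wcoset (m \<cdot> letter (ellE c))"
proof -
  have "(c, True) \<in> GE_idx E" using assms by (simp add: GE_idx_def)
  then have "GE_edge E ellE \<iota> (c, True) \<in> S" using edge_bij unfolding bij_betw_def by blast
  then have "(\<iota> (face E c 1), (ellE c, True), \<iota> (face E c 0)) \<in> GH_edges B X PP H"
    using S_sub assms by (auto simp: GE_edge_def)
  then show ?thesis using that unfolding GH_edges_def by blast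
qed

lemma rho_closed: "letter \<rho> \<in> Mon"
  using letter_closed rho_cell by simp

lemma rho_idem: "im.idem (letter \<rho>)"
  using letter_idem rho_cell by simp

lemma rho_loop_rep:
  obtains m where "m \<in> Mon" "m \<cdot> iv m \<in> H" "\<iota> u = wcoset m" "wcoset (m \<cdot> letter \<rho>) = wcoset m"
  using loop that unfolding GH_edges_def by auto

lemma wcoset_mul_rho:
  assumes "m \<in> Mon" "wcoset (m \<cdot> letter \<rho>) = wcoset m" "a \<in> Mon"
  shows "wcoset (m \<cdot> (letter \<rho> \<cdot> a)) = wcoset (m \<cdot> a)"
  using wcoset_mul[OF _ assms(1,3,2)] assms rho_closed by simp

end

context lift_setting
begin

text \<open>Cells of E carrying the labels of the faces of \<rho>, with the roots that the \<omega>-coset graph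
  forces; for k = 2 the triangle must in addition close up.  These conditions already determine a
  lift of the attaching map.\<close>

definition lift_candidate :: "(nat \<Rightarrow> 'e) \<Rightarrow> bool" where
  "lift_candidate d \<longleftrightarrow>
     (\<forall>i\<le>k. d i \<in> cells E \<and> cdim E (d i) = k - 1 \<and> ellE (d i) = face B \<rho> i)
   \<and> (\<forall>j\<in>{1..k}. root E (d j) = u) \<and> root E (d 0) = face E (e01 E (d k)) 0
   \<and> (k = 2 \<longrightarrow> face E (d 1) 0 = face E (d 0) 0)"

lemma face_rho_in_P: assumes "3 \<le> k" "i \<le> k" shows "face B \<rho> i \<in> P (k - 1)" "face B \<rho> i \<in> PP"
proof -
  have "face B \<rho> i \<in> P (k - 1)" "k - 1 \<le> n"
    using B_cell_in_P face_rho_cell[OF assms(2)] assms by auto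
  then show "face B \<rho> i \<in> P (k - 1)" "face B \<rho> i \<in> PP" using assms mem_PP_iff by auto
qed

lemma face_rho_in_X: "k = 2 \<Longrightarrow> i \<le> k \<Longrightarrow> face B \<rho> i \<in> X"
  using B_edge_in_X face_rho_cell by auto

lemma e01_rho_in_X: "e01 B \<rho> \<in> X"
proof -
  have "cdim B \<rho> = Suc (k - 1)" using rho_cell k by simp
  then show ?thesis using e01_cell[OF B_dcx rho_cell(1)] B_edge_in_X by blast
qed

subsection \<open>Dimension at least three: the faces are loops\<close>

context
  assumes k3: "3 \<le> k"
begin

abbreviation "upper_faces \<equiv> map (face B \<rho>) (rev [1..<k + 1])"

lemma upper_faces_PP: "set upper_faces \<subseteq> PP"
  using face_rho_in_P(2)[OF k3] by auto

lemma rho_bl_absorb: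
  "letter \<rho> \<cdot> (cls (map (\<lambda>a. (a, True)) upper_faces)
      \<cdot> (letter (e01 B \<rho>) \<cdot> letter (face B \<rho> 0) \<cdot> iv (letter (e01 B \<rho>)))) = letter \<rho>"
proof -
  let ?F = "cls (map (\<lambda>a. (a, True)) upper_faces)" and ?e = "letter (e01 B \<rho>)"
  have "bl B \<rho> = map (\<lambda>a. (a, True)) upper_faces @ [(e01 B \<rho>, True), (face B \<rho> 0, True), (e01 B \<rho>, False)]"
    using rho_cell k3 by (simp add: bl_def comp_def)
  then have "cls (bl B \<rho>) = ?F \<cdot> (?e \<cdot> (letter (face B \<rho> 0) \<cdot> cls [(e01 B \<rho>, False)]))"
    using mmul_cls by (metis append_Cons append_Nil)
  then show ?thesis
    using letter_bl[OF rho_cell(3)] letter_False e01_rho_in_X letter_closed face_rho_in_P(2)[OF k3]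
      idem_letters[OF upper_faces_PP]
    by (simp add: im.idem_closed)
qed

lemma upper_faces_closed: "cls (map (\<lambda>a. (a, True)) upper_faces) \<in> Mon"
  using idem_letters[OF upper_faces_PP] by (simp add: im.idem_closed)

lemma conj_face0_idem: "im.idem (letter (e01 B \<rho>) \<cdot> letter (face B \<rho> 0) \<cdot> iv (letter (e01 B \<rho>)))"
  by (rule im.idem_conj) (use letter_closed e01_rho_in_X letter_idem face_rho_in_P(2)[OF k3] in auto)

lemma rho_absorbs_upper_face:
  assumes "1 \<le> j" "j \<le> k" shows "letter \<rho> \<cdot> letter (face B \<rho> j) = letter \<rho>"
proof (rule im.absorb_idem_factor[OF rho_closed idem_letters[OF upper_faces_PP] conj_face0_idem _ _ rho_bl_absorb])
  show "im.idem (letter (face B \<rho> j))" using letter_idem face_rho_in_P(2)[OF k3 assms(2)] .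
  have "j \<in> set (rev [1..<k + 1])" using assms by auto
  then have "face B \<rho> j \<in> set upper_faces" unfolding set_map by (rule imageI)
  then show "cls (map (\<lambda>a. (a, True)) upper_faces) \<cdot> letter (face B \<rho> j) = cls (map (\<lambda>a. (a, True)) upper_faces)"
    by (rule letters_absorb[OF upper_faces_PP])
qed

lemma rho_e01_absorbs_face0:
  "letter \<rho> \<cdot> letter (e01 B \<rho>) \<cdot> letter (face B \<rho> 0) = letter \<rho> \<cdot> letter (e01 B \<rho>)"
proof (rule im.conj_idem_absorb[of "letter \<rho> \<cdot> cls (map (\<lambda>a. (a, True)) upper_faces)"])
  show "letter \<rho> = letter \<rho> \<cdot> cls (map (\<lambda>a. (a, True)) upper_faces)
      \<cdot> (letter (e01 B \<rho>) \<cdot> letter (face B \<rho> 0) \<cdot> iv (letter (e01 B \<rho>)))"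
    by (simp only: im.assoc[OF rho_closed upper_faces_closed im.idem_closed[OF conj_face0_idem]]
        rho_bl_absorb)
  show "letter \<rho> \<cdot> cls (map (\<lambda>a. (a, True)) upper_faces) \<in> Mon"
    using rho_closed upper_faces_closed by simp
  show "letter (e01 B \<rho>) \<in> Mon" using letter_closed e01_rho_in_X by simp
  show "im.idem (letter (face B \<rho> 0))" using letter_idem face_rho_in_P(2)[OF k3] by simp
qed

lemma upper_face_loop:
  assumes "1 \<le> j" "j \<le> k"
  obtains c where "c \<in> cells E" "cdim E c = k - 1" "root E c = u" "ellE c = face B \<rho> j"
proof -
  obtain m where m: "m \<in> Mon" "m \<cdot> iv m \<in> H" "\<iota> u = wcoset m" "wcoset (m \<cdot> letter \<rho>) = wcoset m"
    by (rule rho_loop_rep)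
  have l: "letter (face B \<rho> j) \<in> Mon" using letter_closed face_rho_in_P(2)[OF k3 assms(2)] by simp
  have "wcoset (m \<cdot> letter (face B \<rho> j)) = wcoset (m \<cdot> (letter \<rho> \<cdot> letter (face B \<rho> j)))"
    using wcoset_mul_rho[OF m(1,4) l] by simp
  also have "\<dots> = \<iota> u" using rho_absorbs_upper_face assms m(3,4) by simp
  finally have fixed: "wcoset (m \<cdot> letter (face B \<rho> j)) = \<iota> u" .
  show ?thesis
    by (rule lower_loop_cell[OF u m(1-3) face_rho_in_P(1)[OF k3 assms(2)]]) (use k3 fixed that in auto)
qed

lemma face0_loop:
  assumes dk: "dk \<in> cells E" "cdim E dk = k - 1" "root E dk = u" "ellE dk = face B \<rho> k"
  obtains c where "c \<in> cells E" "cdim E c = k - 1" "root E c = face E (e01 E dk) 0"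
    "ellE c = face B \<rho> 0"
proof -
  obtain m where m: "m \<in> Mon" "m \<cdot> iv m \<in> H" "\<iota> u = wcoset m" "wcoset (m \<cdot> letter \<rho>) = wcoset m"
    by (rule rho_loop_rep)
  let ?e = "letter (e01 B \<rho>)" and ?r0 = "letter (face B \<rho> 0)" and ?eps = "e01 E dk"
  have eM: "?e \<in> Mon" and r0M: "?r0 \<in> Mon"
    using letter_closed e01_rho_in_X face_rho_in_P(2)[OF k3, of 0] by auto
  have dk': "cdim E dk = Suc (k - 2)" using dk(2) k3 by simp
  have eps: "?eps \<in> cells E" "cdim E ?eps = 1" "face E ?eps 1 = u"
    using e01_cell[OF E_dcx dk(1) dk'] dk(3) root_edge by metis+
  have "ellE ?eps = e01 B (face B \<rho> k)" using imm_e01[OF E_imm E_dcx dk(1) dk'] dk(4) by simp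
  also have "\<dots> = e01 B \<rho>" using e01_face[OF B_dcx rho_cell(1), of "k - 2" k] rho_cell k3 by simp
  finally have eps_label: "ellE ?eps = e01 B \<rho>" .
  let ?w = "face E ?eps 0"
  have w: "?w \<in> verts E" using edge_face_in_verts[OF E_dcx eps(1,2)] by simp
  obtain m' where m': "m' \<in> Mon" "\<iota> u = wcoset m'" "\<iota> ?w = wcoset (m' \<cdot> ?e)"
    using edge_cell_GH_edge[OF eps(1,2)] eps(3) eps_label by metis
  have w_coset: "\<iota> ?w = wcoset (m \<cdot> ?e)" using wcoset_mul[OF m'(1) m(1) eM] m'(2,3) m(3) by simp
  have me: "m \<cdot> ?e \<in> Mon" using m(1) eM by simp
  have "wcoset (m \<cdot> ?e \<cdot> ?r0) = wcoset (m \<cdot> (letter \<rho> \<cdot> (?e \<cdot> ?r0)))"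
    using wcoset_mul_rho[OF m(1,4), of "?e \<cdot> ?r0"] m(1) eM r0M by simp
  also have "letter \<rho> \<cdot> (?e \<cdot> ?r0) = letter \<rho> \<cdot> ?e"
    using rho_e01_absorbs_face0 rho_closed eM r0M by simp
  also have "wcoset (m \<cdot> (letter \<rho> \<cdot> ?e)) = \<iota> ?w" using wcoset_mul_rho[OF m(1,4) eM] w_coset by simp
  finally have fixed: "wcoset (m \<cdot> ?e \<cdot> ?r0) = \<iota> ?w" .
  show ?thesis
    by (rule lower_loop_cell[OF w me vertex_rep_mul_iv_mem[OF me w w_coset] w_coset
          face_rho_in_P(1)[OF k3, of 0]])
      (use k3 fixed that in auto)
qed

lemma lift_candidate_ge3: "\<exists>d. lift_candidate d"
proof -
  have "\<forall>j\<in>{1..k}. \<exists>c. c \<in> cells E \<and> cdim E c = k - 1 \<and> root E c = u \<and> ellE c = face B \<rho> j"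
    using upper_face_loop by (metis atLeastAtMost_iff)
  then obtain d' where d': "\<forall>j\<in>{1..k}. d' j \<in> cells E \<and> cdim E (d' j) = k - 1 \<and> root E (d' j) = u
      \<and> ellE (d' j) = face B \<rho> j"
    by (rule bchoice[elim_format]) blast
  obtain d0 where d0: "d0 \<in> cells E" "cdim E d0 = k - 1" "root E d0 = face E (e01 E (d' k)) 0"
      "ellE d0 = face B \<rho> 0"
    using face0_loop d'[rule_format, of k] k3 by auto
  define d where "d i = (if i = 0 then d0 else d' i)" for i
  have "lift_candidate d"
    unfolding lift_candidate_def using d' d0 k3 by (auto simp: d_def)
  then show ?thesis by blast
qed

end


subsection \<open>Dimension two: the faces are edges of a triangle\<close>

context
  assumes k2: "k = 2"
begin

lemma face_letters_closed: "i \<le> 2 \<Longrightarrow> letter (face B \<rho> i) \<in> Mon"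
  using letter_closed face_rho_in_X k2 by simp

lemma rho_bl_triangle:
  "letter \<rho> \<cdot> (letter (face B \<rho> 2) \<cdot> (letter (face B \<rho> 0) \<cdot> iv (letter (face B \<rho> 1)))) = letter \<rho>"
proof -
  have "bl B \<rho> = [(face B \<rho> 2, True), (face B \<rho> 0, True), (face B \<rho> 1, False)]"
    using rho_cell k2 by (simp add: bl_def)
  then have "cls (bl B \<rho>) = letter (face B \<rho> 2) \<cdot> (letter (face B \<rho> 0) \<cdot> cls [(face B \<rho> 1, False)])"
    using mmul_cls by (metis append_Cons append_Nil)
  then show ?thesis using letter_bl[OF rho_cell(3)] letter_False face_rho_in_X k2 by simp
qed

lemma rho_triangle_prefix_reps:
  assumes m: "m \<in> Mon" "m \<cdot> iv m \<in> H" "\<iota> u = wcoset m" "wcoset (m \<cdot> letter \<rho>) = wcoset m"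
  defines "x \<equiv> letter (face B \<rho> 2)" and "y \<equiv> letter (face B \<rho> 0)" and "z \<equiv> letter (face B \<rho> 1)"
  shows "(m \<cdot> x) \<cdot> iv (m \<cdot> x) \<in> H" "(m \<cdot> x \<cdot> y) \<cdot> iv (m \<cdot> x \<cdot> y) \<in> H" "(m \<cdot> z) \<cdot> iv (m \<cdot> z) \<in> H"
proof -
  have xyz: "x \<in> Mon" "y \<in> Mon" "z \<in> Mon"
    using face_letters_closed by (simp_all add: x_def y_def z_def)
  have mr: "m \<cdot> letter \<rho> \<in> Mon" using m(1) rho_closed by simp
  have rep: "(m \<cdot> letter \<rho>) \<cdot> iv (m \<cdot> letter \<rho>) \<in> H"
    using vertex_rep_mul_iv_mem[OF mr u] m(3,4) by simp
  have prefix: "(m \<cdot> p) \<cdot> iv (m \<cdot> p) \<in> H" if "p \<in> Mon" "q \<in> Mon" "letter \<rho> \<cdot> p \<cdot> q = letter \<rho>" for p q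
    using im.prefix_mul_iv_mem[OF H_closed m(1) rho_idem that rep] .
  have bl: "letter \<rho> \<cdot> (x \<cdot> (y \<cdot> iv z)) = letter \<rho>"
    using rho_bl_triangle by (simp add: x_def y_def z_def)
  show "(m \<cdot> x) \<cdot> iv (m \<cdot> x) \<in> H" using prefix[of x "y \<cdot> iv z"] bl xyz rho_closed by simp
  show "(m \<cdot> x \<cdot> y) \<cdot> iv (m \<cdot> x \<cdot> y) \<in> H"
    using prefix[of "x \<cdot> y" "iv z"] bl xyz rho_closed m(1) by simp
  have "letter \<rho> \<cdot> iv (x \<cdot> (y \<cdot> iv z)) = letter \<rho>"
    by (rule im.idem_absorb_iv[OF rho_idem _ bl]) (use xyz in simp)
  then show "(m \<cdot> z) \<cdot> iv (m \<cdot> z) \<in> H" using prefix[of z "iv y \<cdot> iv x"] xyz rho_closed by simp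
qed

lemma rho_triangle_closes:
  assumes m: "m \<in> Mon" "wcoset (m \<cdot> letter \<rho>) = wcoset m"
  shows "wcoset (m \<cdot> letter (face B \<rho> 1)) = wcoset (m \<cdot> letter (face B \<rho> 2) \<cdot> letter (face B \<rho> 0))"
proof -
  let ?x = "letter (face B \<rho> 2)" and ?y = "letter (face B \<rho> 0)" and ?z = "letter (face B \<rho> 1)"
  have xyz: "?x \<in> Mon" "?y \<in> Mon" "?z \<in> Mon" using face_letters_closed by simp_all
  have "letter \<rho> \<cdot> ((?x \<cdot> ?y) \<cdot> iv ?z) = letter \<rho>" using rho_bl_triangle xyz rho_closed by simp
  then have closes: "letter \<rho> \<cdot> ?z = letter \<rho> \<cdot> (?x \<cdot> ?y)"
    by (rule im.idem_absorb_quotient[OF rho_idem _ xyz(3), rotated]) (use xyz in simp)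
  have "wcoset (m \<cdot> ?z) = wcoset (m \<cdot> (letter \<rho> \<cdot> ?z))" using wcoset_mul_rho[OF m xyz(3)] by simp
  also have "\<dots> = wcoset (m \<cdot> (letter \<rho> \<cdot> (?x \<cdot> ?y)))" by (simp only: closes)
  also have "\<dots> = wcoset (m \<cdot> (?x \<cdot> ?y))" using wcoset_mul_rho[OF m, of "?x \<cdot> ?y"] xyz by simp
  finally show ?thesis using m(1) xyz by simp
qed

lemma lift_candidate_2: "\<exists>d. lift_candidate d"
proof -
  obtain m where m: "m \<in> Mon" "m \<cdot> iv m \<in> H" "\<iota> u = wcoset m" "wcoset (m \<cdot> letter \<rho>) = wcoset m"
    by (rule rho_loop_rep)
  note reps = rho_triangle_prefix_reps[OF m]
  have X: "face B \<rho> i \<in> X" if "i \<le> 2" for i using face_rho_in_X k2 that by simp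
  obtain c2 where c2: "c2 \<in> cells E" "cdim E c2 = 1" "face E c2 1 = u" "ellE c2 = face B \<rho> 2"
      "\<iota> (face E c2 0) = wcoset (m \<cdot> letter (face B \<rho> 2))"
    by (rule lower_edge_cell[OF u m(1-3) X reps(1)]) auto
  obtain c1 where c1: "c1 \<in> cells E" "cdim E c1 = 1" "face E c1 1 = u" "ellE c1 = face B \<rho> 1"
      "\<iota> (face E c1 0) = wcoset (m \<cdot> letter (face B \<rho> 1))"
    by (rule lower_edge_cell[OF u m(1-3) X reps(3)]) auto
  have mx: "m \<cdot> letter (face B \<rho> 2) \<in> Mon" using m(1) face_letters_closed by simp
  obtain c0 where c0: "c0 \<in> cells E" "cdim E c0 = 1" "face E c0 1 = face E c2 0" "ellE c0 = face B \<rho> 0"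
      "\<iota> (face E c0 0) = wcoset (m \<cdot> letter (face B \<rho> 2) \<cdot> letter (face B \<rho> 0))"
    by (rule lower_edge_cell[OF edge_face_in_verts[OF E_dcx c2(1,2)] mx
          vertex_rep_mul_iv_mem[OF mx edge_face_in_verts[OF E_dcx c2(1,2)] c2(5)] c2(5) X reps(2)]) auto
  have "face E c1 0 = face E c0 0"
    using iota_inj edge_face_in_verts[OF E_dcx] c0 c1 rho_triangle_closes[OF m(1,4)] by simp
  moreover have "e01 E c2 = c2" using c2(2) by (simp add: e01_def)
  moreover have "root E c = face E c 1" if "cdim E c = 1" for c using root_edge that .
  ultimately have "lift_candidate (\<lambda>i. if i = 0 then c0 else if i = 1 then c1 else c2)"
    unfolding lift_candidate_def using c0 c1 c2 k2 by (auto simp: le_Suc_eq numeral_2_eq_2)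
  then show ?thesis by blast
qed

end

subsection \<open>Gluing and uniqueness\<close>

lemma face_Ck_cell:
  "i \<le> k \<Longrightarrow> face C Ck i \<in> cells C \<and> cdim C (face C Ck i) = k - 1 \<and> ellC (face C Ck i) = face B \<rho> i"
  using dcx_face_cell[OF C_dcx Ck(1)] imm_face[OF C_imm Ck(1)] Ck k by simp

lemma cdim_Ck: "cdim C Ck = Suc (k - 1)" "cdim C Ck = Suc (Suc (k - 2))"
  using Ck k by auto

lemma fS_eq_face_Ck:
  assumes "i \<le> k" "d \<in> cells E" "cdim E d = k - 1" "ellE d = face B \<rho> i"
    "root C (fS d) = root C (face C Ck i)"
  shows "fS d = face C Ck i"
  by (rule imm_eq_if_root_eq[OF C_imm]) (use assms imm_cell[OF fS(1)] fS(2) face_Ck_cell in auto)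

context
  fixes d assumes d: "lift_candidate d"
begin

lemma candidate_cell: "i \<le> k \<Longrightarrow> d i \<in> cells E" "i \<le> k \<Longrightarrow> cdim E (d i) = Suc (k - 2)"
  and candidate_label: "i \<le> k \<Longrightarrow> ellE (d i) = face B \<rho> i"
  and candidate_root: "1 \<le> j \<Longrightarrow> j \<le> k \<Longrightarrow> root E (d j) = u"
  and candidate_root0: "root E (d 0) = face E (e01 E (d k)) 0"
  and candidate_triangle: "k = 2 \<Longrightarrow> face E (d 1) 0 = face E (d 0) 0"
  using d k unfolding lift_candidate_def by auto

lemma candidate_image_upper: assumes "1 \<le> j" "j \<le> k" shows "fS (d j) = face C Ck j"
proof (rule fS_eq_face_Ck[OF assms(2) candidate_cell(1)[OF assms(2)] _ candidate_label[OF assms(2)]])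
  show "cdim E (d j) = k - 1" using candidate_cell(2)[OF assms(2)] k by simp
  have "root C (fS (d j)) = fS (root E (d j))"
    using imm_root[OF fS(1) E_dcx candidate_cell(1)] assms by simp
  also have "\<dots> = root C Ck" using candidate_root assms Ck by simp
  also have "\<dots> = root C (face C Ck j)" using root_face[OF C_dcx Ck(1) cdim_Ck(1)] assms by simp
  finally show "root C (fS (d j)) = root C (face C Ck j)" .
qed

lemma candidate_image: assumes "i \<le> k" shows "fS (d i) = face C Ck i"
proof (cases "i = 0")
  case True
  have dk: "d k \<in> cells E" "cdim E (d k) = Suc (k - 2)" using candidate_cell by auto
  have e: "e01 E (d k) \<in> cells E" "cdim E (e01 E (d k)) = 1" using e01_cell[OF E_dcx dk] by auto
  have "fS (d 0) = face C Ck 0"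
  proof (rule fS_eq_face_Ck[OF _ candidate_cell(1) _ candidate_label])
    show "cdim E (d 0) = k - 1" using candidate_cell(2)[of 0] k by simp
    have "root C (fS (d 0)) = fS (root E (d 0))"
      using imm_root[OF fS(1) E_dcx candidate_cell(1)] by simp
    also have "\<dots> = fS (face E (e01 E (d k)) 0)" using candidate_root0 by simp
    also have "\<dots> = face C (e01 C (face C Ck k)) 0"
      using imm_face[OF fS(1) e(1)] e(2) imm_e01[OF fS(1) E_dcx dk] candidate_image_upper[of k] k
        by simp
    also have "\<dots> = face C (e01 C Ck) 0" using e01_face[OF C_dcx Ck(1) cdim_Ck(2), of k] k by simp
    also have "\<dots> = root C (face C Ck 0)" using root_face0[OF C_dcx Ck(1) cdim_Ck(1)] by simp
    finally show "root C (fS (d 0)) = root C (face C Ck 0)" .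
  qed simp_all
  then show ?thesis using True by simp
qed (use candidate_image_upper assms in simp)

lemma candidate_face_cell:
  "i \<le> k - 1 \<Longrightarrow> j \<le> k \<Longrightarrow> face E (d j) i \<in> cells E \<and> cdim E (face E (d j) i) = k - 2"
  using dcx_face_cell[OF E_dcx candidate_cell(1), of j i] candidate_cell(2)[of j] k by simp

lemma candidate_face_image:
  assumes "i < j" "j \<le> k" shows "fS (face E (d j) i) = fS (face E (d i) (j - 1))"
proof -
  have "fS (face E (d j) i) = face C (face C Ck j) i"
    using imm_face[OF fS(1) candidate_cell(1)] candidate_cell(2) candidate_image assms by simp
  also have "\<dots> = face C (face C Ck i) (j - 1)"
    using dcx_face_face[OF C_dcx Ck(1)] assms Ck k by simp
  also have "\<dots> = fS (face E (d i) (j - 1))"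
    using imm_face[OF fS(1) candidate_cell(1), of i "j - 1"] candidate_cell(2) candidate_image assms
      by simp
  finally show ?thesis .
qed

text \<open>Faces with the same image in C are equal once they share a vertex in the same position
  (local injectivity of the immersion): faces through v_0 share their root; for the face
  omitting v_0 and v_1 we compare last vertices, read off from the face omitting v_0 and v_2.\<close>

lemma candidate_compatible_upper:
  assumes "1 \<le> i" "i < j" "j \<le> k" shows "face E (d j) i = face E (d i) (j - 1)"
proof (rule imm_eq_if_root_eq[OF fS(1)])
  show "face E (d j) i \<in> cells E" "face E (d i) (j - 1) \<in> cells E"
    "cdim E (face E (d j) i) = cdim E (face E (d i) (j - 1))"
      using candidate_face_cell assms by auto
  show "fS (face E (d j) i) = fS (face E (d i) (j - 1))" using candidate_face_image assms by simp
  show "root E (face E (d j) i) = root E (face E (d i) (j - 1))"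
    using root_face[OF E_dcx candidate_cell(1,2), of j i] root_face[OF E_dcx candidate_cell(1,2), of i "j - 1"]
      candidate_root assms by simp
qed

lemma candidate_e01: assumes "2 \<le> j" "j \<le> k" shows "e01 E (d j) = e01 E (d k)"
proof (rule imm_eq_if_root_eq[OF fS(1)])
  show "e01 E (d j) \<in> cells E" "e01 E (d k) \<in> cells E" "cdim E (e01 E (d j)) = cdim E (e01 E (d k))"
    using e01_cell[OF E_dcx candidate_cell(1,2)] assms by auto
  show "fS (e01 E (d j)) = fS (e01 E (d k))"
    using imm_e01[OF fS(1) E_dcx candidate_cell(1,2)] candidate_image e01_face[OF C_dcx Ck(1) cdim_Ck(2)] assms k
    by simp
  show "root E (e01 E (d j)) = root E (e01 E (d k))"
    using e01_cell[OF E_dcx candidate_cell(1,2)] candidate_root assms k by simp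
qed

lemma candidate_compatible_0:
  assumes "2 \<le> j" "j \<le> k" shows "face E (d j) 0 = face E (d 0) (j - 1)"
proof (rule imm_eq_if_root_eq[OF fS(1)])
  show "face E (d j) 0 \<in> cells E" "face E (d 0) (j - 1) \<in> cells E"
    "cdim E (face E (d j) 0) = cdim E (face E (d 0) (j - 1))"
      using candidate_face_cell assms by auto
  show "fS (face E (d j) 0) = fS (face E (d 0) (j - 1))" using candidate_face_image assms by simp
  have "root E (face E (d j) 0) = face E (e01 E (d j)) 0"
    using root_face0[OF E_dcx candidate_cell(1,2)] assms by simp
  also have "\<dots> = root E (d 0)" using candidate_e01[OF assms] candidate_root0 by simp
  also have "\<dots> = root E (face E (d 0) (j - 1))"
    using root_face[OF E_dcx candidate_cell(1,2), of 0 "j - 1"] assms by simp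
  finally show "root E (face E (d j) 0) = root E (face E (d 0) (j - 1))" .
qed

lemma candidate_compatible_01: "face E (d 1) 0 = face E (d 0) 0"
proof (cases "k = 2")
  case True then show ?thesis using candidate_triangle by simp
next
  case False
  then have k3: "3 \<le> k" using k by simp
  have dim: "2 \<le> cdim E (d i)" "cdim E (d i) = Suc (k - 2)" if "i \<le> k" for i
    using candidate_cell(2)[OF that] k3 by auto
  have "face E (face E (d 1) 0) 0 = face E (face E (d 1) 1) 0"
    using dcx_face_face[OF E_dcx candidate_cell(1), of 1 0 1] dim[of 1] k3 by simp
  also have "face E (d 1) 1 = face E (d 2) 1" using candidate_compatible_upper[of 1 2] k3 by simp
  also have "face E (face E (d 2) 1) 0 = face E (face E (d 2) 0) 0"
    using dcx_face_face[OF E_dcx candidate_cell(1), of 2 0 1] dim[of 2] k3 by simp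
  also have "face E (d 2) 0 = face E (d 0) 1" using candidate_compatible_0[of 2] k3 by simp
  also have "face E (face E (d 0) 1) 0 = face E (face E (d 0) 0) 0"
    using dcx_face_face[OF E_dcx candidate_cell(1), of 0 0 1] dim[of 0] k3 by simp
  finally have last_vertex: "face E (face E (d 1) 0) 0 = face E (face E (d 0) 0) 0" .
  show ?thesis
  proof (rule imm_eq_if_face0_eq[OF fS(1) E_dcx, of _ _ "k - 3"])
    show "face E (d 1) 0 \<in> cells E" "face E (d 0) 0 \<in> cells E"
      "cdim E (face E (d 1) 0) = Suc (k - 3)" "cdim E (face E (d 0) 0) = Suc (k - 3)"
      using candidate_face_cell k3 by auto
    show "fS (face E (d 1) 0) = fS (face E (d 0) 0)" using candidate_face_image[of 0 1] k3 by simp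
  qed (rule last_vertex)
qed

lemma lift_ok_candidate: "lift_ok E C fS Ck k u d"
proof -
  have compatible: "face E (d j) i = face E (d i) (j - 1)" if "i < j" "j \<le> k" for i j
  proof (cases "1 \<le> i")
    case True then show ?thesis using candidate_compatible_upper that by simp
  next
    case False
    then have "i = 0" by simp
    then show ?thesis
      using candidate_compatible_0 candidate_compatible_01 that by (cases "j = 1") auto
  qed
  have "cdim E (d i) = k - 1" if "i \<le> k" for i using candidate_cell(2)[OF that] k by simp
  then show ?thesis unfolding lift_ok_def
    using candidate_cell(1) candidate_image candidate_root compatible by auto
qed

end

lemma lift_ok_unique:
  assumes "lift_ok E C fS Ck k u d" "lift_ok E C fS Ck k u d'" "i \<le> k"
  shows "d' i = d i"
proof -
  have L: "\<forall>i\<le>k. d i \<in> cells E \<and> cdim E (d i) = k - 1 \<and> fS (d i) = face C Ck i"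
    "\<forall>i j. i < j \<and> j \<le> k \<longrightarrow> face E (d j) i = face E (d i) (j - 1)" "\<forall>j\<in>{1..k}. root E (d j) = u"
    using assms(1) unfolding lift_ok_def by blast+
  have L': "\<forall>i\<le>k. d' i \<in> cells E \<and> cdim E (d' i) = k - 1 \<and> fS (d' i) = face C Ck i"
    "\<forall>i j. i < j \<and> j \<le> k \<longrightarrow> face E (d' j) i = face E (d' i) (j - 1)" "\<forall>j\<in>{1..k}. root E (d' j) = u"
    using assms(2) unfolding lift_ok_def by blast+
  have upper: "d' j = d j" if "1 \<le> j" "j \<le> k" for j
    using imm_eq_if_root_eq[OF fS(1), of "d' j" "d j"] L L' that by auto
  have "face E (d' 0) 0 = face E (d' 1) 0" using L'(2) k by force
  also have "\<dots> = face E (d 1) 0" using upper[of 1] k by simp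
  also have "\<dots> = face E (d 0) 0" using L(2) k by force
  finally have "d' 0 = d 0"
    using imm_eq_if_face0_eq[OF fS(1) E_dcx, of "d' 0" "d 0" "k - 2"] L L' k by auto
  then show ?thesis using upper assms(3) by (cases "i = 0") auto
qed

lemma lift_exists: "\<exists>d. lift_ok E C fS Ck k u d"
proof -
  obtain d where "lift_candidate d"
    using lift_candidate_2 lift_candidate_ge3 k by (cases "k = 2") auto
  then show ?thesis using lift_ok_candidate by blast
qed

end

theorem mainTheorem11:
  fixes B :: "'l dcx" and X :: "'l set" and P :: "nat \<Rightarrow> 'l set" and n :: nat and b0 :: 'l
    and C :: "'c dcx" and ellC :: "'c \<Rightarrow> 'l"
    and E :: "'e dcx" and ellE :: "'e \<Rightarrow> 'l" and fS :: "'e \<Rightarrow> 'c"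
    and H :: "'l mel set" and \<iota> :: "'e \<Rightarrow> 'l mel set"
    and S :: "('l mel set \<times> ('l \<times> bool) \<times> 'l mel set) set"
    and k :: nat and u :: 'e and \<rho> :: 'l and Ck :: 'c
  assumes B: "is_B B X P n b0"
    and C: "is_labeled C B ellC"
    and H: "closed_inv_submonoid B X (Pall P n) H"
    and k: "2 \<le> k" "k \<le> n"
    and E: "is_labeled E B ellE"
    and fS: "is_imm E C fS" "\<forall>c\<in>cells E. ellC (fS c) = ellE c"
    and vert_bij: "bij_betw \<iota> (verts E) {R. is_coset B X (Pall P n) H R}"
    and S_sub: "S \<subseteq> GH_edges B X (Pall P n) H"
    and edge_bij: "bij_betw (GE_edge E ellE \<iota>) (GE_idx E) S"
    and S_low: "\<forall>(R1, a, R2) \<in> GH_edges B X (Pall P n) H.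
                  fst a \<in> X \<union> (\<Union>j\<in>{2..<k}. P j) \<longrightarrow> (R1, a, R2) \<in> S"
    and u: "u \<in> verts E"
    and loop: "(\<iota> u, (\<rho>, True), \<iota> u) \<in> GH_edges B X (Pall P n) H"
              "(\<iota> u, (\<rho>, True), \<iota> u) \<notin> S"
    and rho: "\<rho> \<in> P k"
    and Ck: "Ck \<in> cells C" "cdim C Ck = k" "ellC Ck = \<rho>" "root C Ck = fS u"
  shows "\<exists>d. lift_ok E C fS Ck k u d
           \<and> (\<forall>d'. lift_ok E C fS Ck k u d' \<longrightarrow> (\<forall>i\<le>k. d' i = d i))
           \<and> is_dcx (attach E k d)
           \<and> root (attach E k d) None = Some u"
proof -
  interpret lift_setting B X P n b0 C ellC E ellE fS H \<iota> S k u \<rho> Ck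
    by (intro lift_setting.intro lift_setting_axioms.intro B_complex.intro) (fact assms)+
  obtain d where d: "lift_ok E C fS Ck k u d" using lift_exists by blast
  then have cells: "\<forall>i\<le>k. d i \<in> cells E \<and> cdim E (d i) = k - 1"
    and compatible: "\<forall>i j. i < j \<and> j \<le> k \<longrightarrow> face E (d j) i = face E (d i) (j - 1)"
    and roots: "root E (d k) = u"
    using k unfolding lift_ok_def by auto
  show ?thesis
  proof (intro exI conjI allI impI)
    show "lift_ok E C fS Ck k u d" by (rule d)
    show "d' i = d i" if "lift_ok E C fS Ck k u d'" "i \<le> k" for d' i
      using lift_ok_unique[OF d that] .
    show "is_dcx (attach E k d)" using is_dcx_attach[OF E_dcx k(1) cells compatible] .
    show "root (attach E k d) None = Some u" using root_attach[of k E d u] cells roots k by auto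
  qed
qed

end
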